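(* Let $B$ be a finite Boolean lattice and $F$ a sheaf on $B$. Then $$\mathrm{HS}_*(B\setminus\mathbf{0};F)\cong\mathrm{HC}_*(B\setminus\mathbf{0};F).$$
   Context: $B$ is the lattice of all subsets of a finite set $A=\{a_1,\dots,a_n\}$ ordered by inclusion, with minimum $\mathbf{0}=\varnothing$; $B\setminus\mathbf{0}$ is $B$ with $\varnothing$ removed. A sheaf $F$ on a poset $P$ assigns an $R$-module $F(x)$ ($R$ commutative with $1$) to each $x\in P$ and a homomorphism $F^y_x:F(y)\to F(x)$ to each $x\le y$, functorially (contravariant functor); sheaves restrict to subposets. Sheaf homology $\mathrm{HS}_*(P;F)$ of a finite poset $P$ is the homology of the complex $S_n(P;F)=\bigoplus_\sigma F(x_0)$, sum over chains $\sigma=(x_n\le\cdots\le x_0)$ in $P$, with $d(s_\sigma)=F^{x_0}_{x_1}(s)_{d_0\sigma}+\sum_{i=1}^n(-1)^is_{d_i\sigma}$ ($s_\sigma$ is $s\in F(x_0)$ in the summand indexed by $\sigma$; $d_i\sigma$ omits $x_i$); equivalently the left derived functors of colimit. Cellular homology of $B\setminus\mathbf{0}$: $\mathrm{HC}_*(B\setminus\mathbf{0};F)$ is the homology of the complex with $C_k=\bigoplus_{|y|=k+1}F(y)$ (sum over subsets $y$ of size $k+1$) and differential $d=\sum\varepsilon^y_wF^y_w$ over pairs $w\subset y$ of nonempty subsets with $|w|=|y|-1$, where $\varepsilon^y_w=(-1)^{j-1}$ if $y=\{a_{i_1},\dots,a_{i_m}\}$ with $i_1<\cdots<i_m$ and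 $w=y\setminus\{a_{i_j}\}$. *)

theory Defs
  imports Main "HOL.Modules" "HOL-Library.Function_Algebras"
begin

text \<open>R-modules: the ring R is a type 'r::comm_ring_1; all modules F(x) are
  submodules (subspaces) of one ambient R-module 'm with scalar action s.\<close>

definition alt :: "nat \<Rightarrow> 'm::ab_group_add \<Rightarrow> 'm" where
  "alt i v = (if even i then v else - v)"

definition lin_on :: "('r::comm_ring_1 \<Rightarrow> 'm::ab_group_add \<Rightarrow> 'm) \<Rightarrow> ('r \<Rightarrow> 'n::ab_group_add \<Rightarrow> 'n)
    \<Rightarrow> 'm set \<Rightarrow> ('m \<Rightarrow> 'n) \<Rightarrow> bool" where
  "lin_on s t M f \<longleftrightarrow> (\<forall>u\<in>M. \<forall>v\<in>M. f (u + v) = f u + f v) \<and> (\<forall>r. \<forall>u\<in>M. f (s r u) = t r (f u))"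

definition is_sheaf :: "('r::comm_ring_1 \<Rightarrow> 'm::ab_group_add \<Rightarrow> 'm) \<Rightarrow> 'a set set
    \<Rightarrow> ('a set \<Rightarrow> 'm set) \<Rightarrow> ('a set \<Rightarrow> 'a set \<Rightarrow> 'm \<Rightarrow> 'm) \<Rightarrow> bool" where
  "is_sheaf s P F res \<longleftrightarrow>
     (\<forall>x\<in>P. 0 \<in> F x \<and> (\<forall>u\<in>F x. \<forall>v\<in>F x. u + v \<in> F x) \<and> (\<forall>r. \<forall>u\<in>F x. s r u \<in> F x)) \<and>
     (\<forall>x\<in>P. \<forall>y\<in>P. x \<subseteq> y \<longrightarrow> (\<forall>v\<in>F y. res y x v \<in> F x) \<and> lin_on s s (F y) (res y x)) \<and>
     (\<forall>x\<in>P. \<forall>v\<in>F x. res x x v = v) \<and>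
     (\<forall>x\<in>P. \<forall>y\<in>P. \<forall>z\<in>P. x \<subseteq> y \<longrightarrow> y \<subseteq> z \<longrightarrow> (\<forall>v\<in>F z. res y x (res z y v) = res z x v))"

text \<open>A complex is given by carriers C n (n \<ge> 0) and differentials d n : C n \<rightarrow> C (n-1),
  with d 0 = 0 (C (-1) = 0).\<close>
definition cycles :: "(nat \<Rightarrow> ('i \<Rightarrow> 'm::ab_group_add) set) \<Rightarrow> (nat \<Rightarrow> ('i \<Rightarrow> 'm) \<Rightarrow> ('i \<Rightarrow> 'm))
    \<Rightarrow> nat \<Rightarrow> ('i \<Rightarrow> 'm) set" where
  "cycles C d n = {c \<in> C n. n = 0 \<or> d n c = (\<lambda>_. 0)}"

definition boundaries :: "(nat \<Rightarrow> ('i \<Rightarrow> 'm::ab_group_add) set) \<Rightarrow> (nat \<Rightarrow> ('i \<Rightarrow> 'm) \<Rightarrow> ('i \<Rightarrow> 'm))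
    \<Rightarrow> nat \<Rightarrow> ('i \<Rightarrow> 'm) set" where
  "boundaries C d n = d (Suc n) ` C (Suc n)"

definition fscale :: "('r \<Rightarrow> 'm \<Rightarrow> 'm) \<Rightarrow> 'r \<Rightarrow> ('i \<Rightarrow> 'm) \<Rightarrow> ('i \<Rightarrow> 'm)" where
  "fscale s r c = (\<lambda>i. s r (c i))"

text \<open>Isomorphism of R-modules H_n(C) = Z_n(C)/B_n(C) \<cong> H_n(D) = Z_n(D)/B_n(D), written out:
  an R-linear map on cycles, preserving cycles and boundaries, whose induced map on
  the quotients is surjective and injective.\<close>
definition homology_iso ::
  "('r::comm_ring_1 \<Rightarrow> 'm::ab_group_add \<Rightarrow> 'm)
   \<Rightarrow> (nat \<Rightarrow> ('i \<Rightarrow> 'm) set) \<Rightarrow> (nat \<Rightarrow> ('i \<Rightarrow> 'm) \<Rightarrow> ('i \<Rightarrow> 'm))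
   \<Rightarrow> (nat \<Rightarrow> ('j \<Rightarrow> 'm) set) \<Rightarrow> (nat \<Rightarrow> ('j \<Rightarrow> 'm) \<Rightarrow> ('j \<Rightarrow> 'm)) \<Rightarrow> nat \<Rightarrow> bool" where
  "homology_iso s C d D e n \<longleftrightarrow>
     (\<exists>\<phi>. lin_on (fscale s) (fscale s) (cycles C d n) \<phi> \<and>
          \<phi> ` cycles C d n \<subseteq> cycles D e n \<and>
          \<phi> ` boundaries C d n \<subseteq> boundaries D e n \<and>
          (\<forall>z\<in>cycles D e n. \<exists>c\<in>cycles C d n. z - \<phi> c \<in> boundaries D e n) \<and>
          (\<forall>c\<in>cycles C d n. \<phi> c \<in> boundaries D e n \<longrightarrow> c \<in> boundaries C d n))"

text \<open>A chain \<sigma> = (x_n \<le> ... \<le> x_0) is the list [x_0, x_1, ..., x_n].\<close>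
definition pchains :: "'a set set \<Rightarrow> nat \<Rightarrow> 'a set list set" where
  "pchains P n = {\<sigma>. length \<sigma> = Suc n \<and> set \<sigma> \<subseteq> P \<and> (\<forall>i<n. \<sigma> ! Suc i \<subseteq> \<sigma> ! i)}"

definition face :: "nat \<Rightarrow> 'b list \<Rightarrow> 'b list" where
  "face i \<sigma> = take i \<sigma> @ drop (Suc i) \<sigma>"

definition S_car :: "'a set set \<Rightarrow> ('a set \<Rightarrow> 'm::ab_group_add set) \<Rightarrow> nat \<Rightarrow> ('a set list \<Rightarrow> 'm) set" where
  "S_car P F n = {c. \<forall>\<sigma>. (\<sigma> \<in> pchains P n \<longrightarrow> c \<sigma> \<in> F (hd \<sigma>)) \<and> (\<sigma> \<notin> pchains P n \<longrightarrow> c \<sigma> = 0)}"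

definition S_d :: "'a set set \<Rightarrow> ('a set \<Rightarrow> 'a set \<Rightarrow> 'm::ab_group_add \<Rightarrow> 'm) \<Rightarrow> nat
    \<Rightarrow> ('a set list \<Rightarrow> 'm) \<Rightarrow> ('a set list \<Rightarrow> 'm)" where
  "S_d P res n c = (\<lambda>\<tau>. if \<tau> \<in> pchains P (n - 1) then
      (\<Sum>\<sigma>\<in>pchains P n.
         (if face 0 \<sigma> = \<tau> then res (\<sigma> ! 0) (\<sigma> ! 1) (c \<sigma>) else 0)
         + (\<Sum>i\<in>{1..n}. if face i \<sigma> = \<tau> then alt i (c \<sigma>) else 0))
     else 0)"

definition cells :: "'a set \<Rightarrow> nat \<Rightarrow> 'a set set" where
  "cells A k = {y. y \<subseteq> A \<and> card y = Suc k}"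

definition C_car :: "'a set \<Rightarrow> ('a set \<Rightarrow> 'm::ab_group_add set) \<Rightarrow> nat \<Rightarrow> ('a set \<Rightarrow> 'm) set" where
  "C_car A F k = {c. \<forall>y. (y \<in> cells A k \<longrightarrow> c y \<in> F y) \<and> (y \<notin> cells A k \<longrightarrow> c y = 0)}"

text \<open>For y = w \<union> {a}, a \<notin> w: \<epsilon>^y_w = (-1)^(j-1), where a is the j-th element of y in the
  order of A; j - 1 = number of elements of w below a.\<close>
definition C_d :: "'a::linorder set \<Rightarrow> ('a set \<Rightarrow> 'a set \<Rightarrow> 'm::ab_group_add \<Rightarrow> 'm) \<Rightarrow> nat
    \<Rightarrow> ('a set \<Rightarrow> 'm) \<Rightarrow> ('a set \<Rightarrow> 'm)" where
  "C_d A res k c = (\<lambda>w. if w \<in> cells A (k - 1) then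
      (\<Sum>a\<in>A - w. alt (card {b\<in>w. b < a}) (res (insert a w) w (c (insert a w))))
     else 0)"

end

theory Submission
  imports Defs
begin

text \<open>Both complexes are compared through integer matrices. A chain \<open>\<sigma> = (x\<^sub>0 \<supseteq> \<dots> \<supseteq> x\<^sub>n)\<close>
  of \<open>B - 0\<close> is sent by \<open>\<psi>\<close> to the cell \<open>{Min x\<^sub>0, \<dots>, Min x\<^sub>n}\<close> if these minima strictly increase,
  and to \<open>0\<close> otherwise; conversely \<open>\<phi>\<close> sends a cell \<open>y\<close> to the cone with apex \<open>y\<close> over \<open>\<phi> (\<partial>y)\<close>.
  Both are chain maps and \<open>\<psi> \<circ> \<phi> = id\<close>. Since the chains below a fixed \<open>x\<close> form a cone with apex
  \<open>x\<close>, coning also yields a chain homotopy \<open>K\<close> with \<open>\<partial>K + K\<partial> = 1 - \<phi> \<circ> \<psi>\<close>. All these matrices only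
  connect a chain to chains with smaller top element, so they act on sheaf-valued chains through
  the restriction maps, and this action turns products of matrices into composites. Hence the
  integer identities give a deformation retraction of \<open>S\<^sub>*(B - 0; F)\<close> onto the cellular complex,
  which induces the isomorphism in homology.\<close>

section \<open>Deformation retractions induce isomorphisms in homology\<close>

lemma lin_on_subset: "lin_on s t M f \<Longrightarrow> N \<subseteq> M \<Longrightarrow> lin_on s t N f"
  unfolding lin_on_def by blast

lemma homology_iso_if_deformation_retract:
  fixes C :: "nat \<Rightarrow> ('i \<Rightarrow> 'm::ab_group_add) set" and D :: "nat \<Rightarrow> ('j \<Rightarrow> 'm) set"
  assumes psi_lin: "lin_on (fscale s) (fscale s) (C n) (psi n)"
    and psi_mem: "\<And>m c. c \<in> C m \<Longrightarrow> psi m c \<in> D m"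
    and phi_mem: "\<And>m z. z \<in> D m \<Longrightarrow> phi m z \<in> C m"
    and htpy_mem: "\<And>c. c \<in> C n \<Longrightarrow> htpy c \<in> C (Suc n)"
    and add_mem: "\<And>c c'. c \<in> C (Suc n) \<Longrightarrow> c' \<in> C (Suc n) \<Longrightarrow> c + c' \<in> C (Suc n)"
    and d_add: "\<And>c c'. c \<in> C (Suc n) \<Longrightarrow> c' \<in> C (Suc n) \<Longrightarrow> d (Suc n) (c + c') = d (Suc n) c + d (Suc n) c'"
    and zero_mem: "0 \<in> D (Suc n)" and e_zero: "e (Suc n) 0 = 0"
    and psi_zero: "\<And>m. psi m 0 = 0" and phi_zero: "\<And>m. phi m 0 = 0"
    and psi_chain: "\<And>m c. c \<in> C (Suc m) \<Longrightarrow> e (Suc m) (psi (Suc m) c) = psi m (d (Suc m) c)"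
    and phi_chain: "\<And>m z. z \<in> D (Suc m) \<Longrightarrow> d (Suc m) (phi (Suc m) z) = phi m (e (Suc m) z)"
    and retract: "\<And>z. z \<in> D n \<Longrightarrow> psi n (phi n z) = z"
    and homotopy: "\<And>c. c \<in> cycles C d n \<Longrightarrow> d (Suc n) (htpy c) = c - phi n (psi n c)"
  shows "homology_iso s C d D e n"
  unfolding homology_iso_def
proof (intro exI conjI ballI impI subsetI)
  show "lin_on (fscale s) (fscale s) (cycles C d n) (psi n)"
    using psi_lin by (rule lin_on_subset) (auto simp: cycles_def)
next
  fix z assume "z \<in> psi n ` cycles C d n"
  then obtain c where c: "c \<in> cycles C d n" "z = psi n c"
    by blast
  have "n = 0 \<or> e n z = (\<lambda>_. 0)"
    using c psi_chain[of c "n - 1"] psi_zero by (cases n) (auto simp: cycles_def zero_fun_def)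
  then show "z \<in> cycles D e n"
    using c psi_mem by (auto simp: cycles_def)
next
  fix z assume "z \<in> psi n ` boundaries C d n"
  then obtain b where "b \<in> C (Suc n)" "z = psi n (d (Suc n) b)"
    by (auto simp: boundaries_def)
  then show "z \<in> boundaries D e n"
    using psi_chain psi_mem unfolding boundaries_def by (metis image_eqI)
next
  fix z assume z: "z \<in> cycles D e n"
  have "n = 0 \<or> d n (phi n z) = (\<lambda>_. 0)"
    using z phi_chain[of z "n - 1"] phi_zero by (cases n) (auto simp: cycles_def zero_fun_def)
  then have "phi n z \<in> cycles C d n"
    using z phi_mem by (auto simp: cycles_def)
  moreover have "z - psi n (phi n z) \<in> boundaries D e n"
    using z retract zero_mem e_zero unfolding boundaries_def cycles_def by (metis (mono_tags, lifting) diff_self image_eqI mem_Collect_eq)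
  ultimately show "\<exists>c\<in>cycles C d n. z - psi n c \<in> boundaries D e n"
    by blast
next
  fix c assume c: "c \<in> cycles C d n" and "psi n c \<in> boundaries D e n"
  then obtain b where b: "b \<in> D (Suc n)" "psi n c = e (Suc n) b"
    by (auto simp: boundaries_def)
  have cC: "c \<in> C n"
    using c by (simp add: cycles_def)
  have "d (Suc n) (htpy c + phi (Suc n) b) = c"
    using d_add[OF htpy_mem[OF cC] phi_mem[OF b(1)]] homotopy[OF c] phi_chain[OF b(1)] b(2) by simp
  then show "c \<in> boundaries C d n"
    using add_mem[OF htpy_mem[OF cC] phi_mem[OF b(1)]] unfolding boundaries_def by (metis image_eqI)
qed

section \<open>Faces of lists and chains of a poset\<close>

lemma face_length [simp]: "i < length xs \<Longrightarrow> length (face i xs) = length xs - 1"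
  by (simp add: face_def)

lemma face_nth:
  "i < length xs \<Longrightarrow> k < length xs - 1 \<Longrightarrow> face i xs ! k = (if k < i then xs ! k else xs ! Suc k)"
  by (auto simp: face_def nth_append min_def)

lemma face_face: "i \<le> j \<Longrightarrow> Suc j < length xs \<Longrightarrow> face j (face i xs) = face i (face (Suc j) xs)"
  by (rule nth_equalityI) (auto simp: face_nth)

lemma map_face: "map f (face i xs) = face i (map f xs)"
  by (simp add: face_def take_map drop_map)

lemma face_0_Cons [simp]: "face 0 (x # xs) = xs"
  by (simp add: face_def)

lemma face_Suc_Cons [simp]: "face (Suc i) (x # xs) = x # face i xs"
  by (simp add: face_def)

lemma hd_face: "0 < i \<Longrightarrow> xs \<noteq> [] \<Longrightarrow> hd (face i xs) = hd xs"
  by (cases xs) (auto simp: face_def)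

lemma set_face_subset: "set (face i xs) \<subseteq> set xs"
  unfolding face_def by (auto dest: in_set_takeD in_set_dropD)

lemma set_face_distinct:
  assumes "distinct xs" "i < length xs"
  shows "set (face i xs) = set xs - {xs ! i}"
proof -
  have xs: "xs = take i xs @ xs ! i # drop (Suc i) xs"
    using assms(2) by (simp add: id_take_nth_drop)
  then have "distinct (take i xs @ xs ! i # drop (Suc i) xs)"
    using assms(1) by metis
  then have "xs ! i \<notin> set (take i xs) \<union> set (drop (Suc i) xs)"
    by auto
  moreover have "set xs = insert (xs ! i) (set (take i xs) \<union> set (drop (Suc i) xs))"
    by (subst xs) auto
  ultimately show ?thesis
    unfolding face_def by auto
qed

lemma sorted_wrt_face:
  assumes "sorted_wrt R xs"
  shows "sorted_wrt R (face i xs)"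
proof (cases "i < length xs")
  case True
  then have "sorted_wrt R (take i xs @ [xs ! i] @ drop (Suc i) xs)"
    using assms id_take_nth_drop by force
  then show ?thesis
    by (simp add: face_def sorted_wrt_append)
qed (use assms in \<open>simp add: face_def\<close>)

text \<open>Every face of a list of length \<open>N + 1\<close> arises twice as a double face, with opposite
  signs, by the simplicial identity \<open>face_face\<close>.\<close>

lemma alternating_double_face_sum:
  assumes len: "length xs = Suc N"
  shows "(\<Sum>i<Suc N. \<Sum>j<N. (-1) ^ (i + j) * f (face j (face i xs))) = (0::int)"
proof -
  define g where "g = (\<lambda>(i, j). (-1) ^ (i + j) * f (face j (face i xs)))"
  define S where "S = {..<Suc N} \<times> {..<N}"
  define below where "below = {p \<in> S. snd p < fst p}"
  define above where "above = {p \<in> S. \<not> snd p < fst p}"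
  have fin: "finite below" "finite above"
    by (auto simp: below_def above_def S_def)
  have bij: "bij_betw (\<lambda>(i, j). (Suc j, i)) above below"
    by (rule bij_betw_byWitness[where f' = "\<lambda>(i, j). (j, i - 1)"]) (auto simp: above_def below_def S_def)
  have "sum g below = sum (g \<circ> (\<lambda>(i, j). (Suc j, i))) above"
    using sum.reindex_bij_betw[OF bij, of g] by simp
  also have "\<dots> = sum (\<lambda>p. - g p) above"
  proof (rule sum.cong[OF refl])
    fix p assume p: "p \<in> above"
    obtain i j where ij: "p = (i, j)" by (cases p)
    have "i \<le> j" "Suc j < length xs"
      using p ij len by (auto simp: above_def S_def)
    then show "(g \<circ> (\<lambda>(i, j). (Suc j, i))) p = - g p"
      by (simp add: g_def ij face_face add.commute)
  qed
  finally have "sum g below + sum g above = 0"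
    by (simp add: sum_negf)
  moreover have "S = below \<union> above" "below \<inter> above = {}"
    by (auto simp: below_def above_def)
  ultimately have "sum g S = 0"
    using fin by (simp add: sum.union_disjoint)
  then show ?thesis
    by (simp add: S_def g_def sum.cartesian_product)
qed

lemma pchains_sorted_wrt:
  "pchains P n = {\<sigma>. length \<sigma> = Suc n \<and> set \<sigma> \<subseteq> P \<and> sorted_wrt (\<lambda>x y. y \<subseteq> x) \<sigma>}"
proof -
  have "transp (\<lambda>x y::'a set. y \<subseteq> x)"
    by (auto simp: transp_def)
  then show ?thesis
    unfolding pchains_def by (auto simp: sorted_wrt_iff_nth_Suc_transp)
qed

lemma pchains_not_Nil: "\<sigma> \<in> pchains P n \<Longrightarrow> \<sigma> \<noteq> []"
  by (auto simp: pchains_def)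

lemma pchains_length: "\<sigma> \<in> pchains P n \<Longrightarrow> length \<sigma> = Suc n"
  by (simp add: pchains_def)

lemma pchains_subset_hd: "\<sigma> \<in> pchains P n \<Longrightarrow> x \<in> set \<sigma> \<Longrightarrow> x \<subseteq> hd \<sigma>"
  by (cases \<sigma>) (auto simp: pchains_sorted_wrt)

lemma pchains_hd_mem: "\<sigma> \<in> pchains P n \<Longrightarrow> hd \<sigma> \<in> P"
  by (cases \<sigma>) (auto simp: pchains_sorted_wrt)

lemma pchains_0: "pchains P 0 = (\<lambda>x. [x]) ` P"
  by (auto simp: pchains_def length_Suc_conv)

lemma Cons_in_pchains: "x # \<tau> \<in> pchains P (Suc n) \<longleftrightarrow> x \<in> P \<and> \<tau> \<in> pchains P n \<and> hd \<tau> \<subseteq> x"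
proof
  assume "x # \<tau> \<in> pchains P (Suc n)"
  then show "x \<in> P \<and> \<tau> \<in> pchains P n \<and> hd \<tau> \<subseteq> x"
    by (cases \<tau>) (auto simp: pchains_sorted_wrt)
next
  assume "x \<in> P \<and> \<tau> \<in> pchains P n \<and> hd \<tau> \<subseteq> x"
  then show "x # \<tau> \<in> pchains P (Suc n)"
    using pchains_subset_hd[of \<tau> P n] by (auto simp: pchains_sorted_wrt)
qed

lemma face_in_pchains: "\<sigma> \<in> pchains P (Suc n) \<Longrightarrow> i \<le> Suc n \<Longrightarrow> face i \<sigma> \<in> pchains P n"
  unfolding pchains_sorted_wrt using set_face_subset sorted_wrt_face by fastforce

lemma hd_face_subset: "\<sigma> \<in> pchains P (Suc n) \<Longrightarrow> i \<le> Suc n \<Longrightarrow> hd (face i \<sigma>) \<subseteq> hd \<sigma>"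
  using face_in_pchains[of \<sigma> P n i] set_face_subset[of i \<sigma>] pchains_not_Nil pchains_subset_hd
  by (metis hd_in_set subset_code(1))

lemma finite_pchains: "finite P \<Longrightarrow> finite (pchains P n)"
  by (rule finite_subset[of _ "{xs. set xs \<subseteq> P \<and> length xs = Suc n}"])
    (auto simp: pchains_def finite_lists_length_eq)

section \<open>Integer chains of the order complex\<close>

lemma sum_mult_assoc:
  "(\<Sum>j\<in>J. (\<Sum>i\<in>I. a i * b i j) * (c j :: int)) = (\<Sum>i\<in>I. a i * (\<Sum>j\<in>J. b i j * c j))"
  by (simp add: sum_distrib_right sum_distrib_left mult.assoc) (rule sum.swap)

lemma sum_delta_mult:
  "finite S \<Longrightarrow> (\<Sum>x\<in>S. (if x = a then 1 else 0) * f x) = (if a \<in> S then f a else (0::int))"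
  by (simp add: if_distrib [of "\<lambda>x. x * _"] sum.delta cong: if_cong)

lemma sum_mult_nonzero:
  "(\<Sum>w\<in>W. k w * (f w :: int)) \<noteq> 0 \<Longrightarrow> \<exists>w\<in>W. k w \<noteq> 0 \<and> f w \<noteq> 0"
  by (metis (mono_tags, lifting) mult_eq_0_iff sum.neutral)

definition chain_inc :: "'a set list \<Rightarrow> 'a set list \<Rightarrow> int" where
  "chain_inc \<sigma> \<tau> = (\<Sum>i<length \<sigma>. if face i \<sigma> = \<tau> then (-1) ^ i else 0)"

definition int_bd :: "'a set set \<Rightarrow> nat \<Rightarrow> ('a set list \<Rightarrow> int) \<Rightarrow> 'a set list \<Rightarrow> int" where
  "int_bd P n T = (\<lambda>\<rho>. \<Sum>\<tau>\<in>pchains P n. T \<tau> * chain_inc \<tau> \<rho>)"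

definition cone :: "'a set \<Rightarrow> ('a set list \<Rightarrow> int) \<Rightarrow> 'a set list \<Rightarrow> int" where
  "cone x T = (\<lambda>\<rho>. case \<rho> of [] \<Rightarrow> 0 | y # \<tau> \<Rightarrow> if y = x then T \<tau> else 0)"

lemma cone_Nil [simp]: "cone x T [] = 0"
  and cone_Cons [simp]: "cone x T (y # \<tau>) = (if y = x then T \<tau> else 0)"
  by (auto simp: cone_def)

lemma chain_inc_nonzero: "chain_inc \<sigma> \<tau> \<noteq> 0 \<Longrightarrow> \<exists>i<length \<sigma>. face i \<sigma> = \<tau>"
  unfolding chain_inc_def by (rule ccontr) (auto intro!: sum.neutral)

lemma chain_inc_singleton: "chain_inc [x] \<rho> = (if \<rho> = [] then 1 else 0)"
  by (auto simp: chain_inc_def face_def)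

lemma chain_inc_Cons:
  "chain_inc (x # \<tau>) \<rho> = (if \<tau> = \<rho> then 1 else 0) - (\<Sum>i<length \<tau>. if x # face i \<tau> = \<rho> then (-1) ^ i else 0)"
proof -
  have "(\<Sum>i<length \<tau>. if x # face i \<tau> = \<rho> then (-1::int) ^ Suc i else 0)
      = - (\<Sum>i<length \<tau>. if x # face i \<tau> = \<rho> then (-1) ^ i else 0)"
    by (simp add: sum_negf [symmetric]) (rule sum.cong, auto)
  then show ?thesis
    unfolding chain_inc_def length_Cons sum.lessThan_Suc_shift by simp
qed

lemma int_bd_0: "int_bd P 0 U \<rho> = (\<Sum>\<tau>\<in>pchains P 0. U \<tau>) * (if \<rho> = [] then 1 else 0)"
proof -
  have "chain_inc \<tau> \<rho> = (if \<rho> = [] then 1 else 0)" if "\<tau> \<in> pchains P 0" for \<tau>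
    using that by (auto simp: pchains_0 chain_inc_singleton)
  then show ?thesis
    unfolding int_bd_def sum_distrib_right by (intro sum.cong) simp_all
qed

lemma chain_inc_not_pchains:
  assumes "\<sigma> \<in> pchains P (Suc n)" "\<tau> \<notin> pchains P n"
  shows "chain_inc \<sigma> \<tau> = 0"
proof (rule ccontr)
  assume "chain_inc \<sigma> \<tau> \<noteq> 0"
  then obtain i where "i < length \<sigma>" "face i \<sigma> = \<tau>"
    using chain_inc_nonzero by blast
  then show False
    using assms face_in_pchains[OF assms(1), of i] pchains_length[OF assms(1)] by simp
qed

lemma chain_inc_hd_subset:
  assumes "\<sigma> \<in> pchains P (Suc n)" "chain_inc \<sigma> \<tau> \<noteq> 0"
  shows "hd \<tau> \<subseteq> hd \<sigma>"
proof -
  obtain i where "i < length \<sigma>" "face i \<sigma> = \<tau>"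
    using chain_inc_nonzero assms(2) by blast
  then show ?thesis
    using hd_face_subset[OF assms(1), of i] pchains_length[OF assms(1)] by simp
qed

lemma sum_chain_inc:
  assumes fin: "finite P" and \<sigma>: "\<sigma> \<in> pchains P (Suc n)"
  shows "(\<Sum>\<tau>\<in>pchains P n. chain_inc \<sigma> \<tau> * f \<tau>) = (\<Sum>i<Suc (Suc n). (-1) ^ i * f (face i \<sigma>))"
proof -
  have "(\<Sum>\<tau>\<in>pchains P n. chain_inc \<sigma> \<tau> * f \<tau>)
      = (\<Sum>i<Suc (Suc n). \<Sum>\<tau>\<in>pchains P n. if face i \<sigma> = \<tau> then (-1) ^ i * f \<tau> else 0)"
    unfolding chain_inc_def pchains_length[OF \<sigma>] sum_distrib_right
    by (subst sum.swap) (simp add: if_distrib [of "\<lambda>x. x * _"] cong: if_cong)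
  also have "\<dots> = (\<Sum>i<Suc (Suc n). (-1) ^ i * f (face i \<sigma>))"
    using face_in_pchains[OF \<sigma>] finite_pchains[OF fin] by (intro sum.cong) (auto simp: sum.delta)
  finally show ?thesis .
qed

lemma chain_inc_square_zero:
  assumes fin: "finite P" and \<sigma>: "\<sigma> \<in> pchains P (Suc (Suc n))"
  shows "(\<Sum>\<tau>\<in>pchains P (Suc n). chain_inc \<sigma> \<tau> * chain_inc \<tau> \<rho>) = 0"
proof -
  have len: "length \<sigma> = Suc (Suc (Suc n))"
    using \<sigma> by (rule pchains_length)
  have "(\<Sum>\<tau>\<in>pchains P (Suc n). chain_inc \<sigma> \<tau> * chain_inc \<tau> \<rho>)
      = (\<Sum>i<Suc (Suc (Suc n)). (-1) ^ i * chain_inc (face i \<sigma>) \<rho>)"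
    by (rule sum_chain_inc[OF fin \<sigma>])
  also have "\<dots> = (\<Sum>i<Suc (Suc (Suc n)). \<Sum>j<Suc (Suc n).
      (-1) ^ (i + j) * (if face j (face i \<sigma>) = \<rho> then 1 else 0))"
  proof (rule sum.cong[OF refl])
    fix i assume "i \<in> {..<Suc (Suc (Suc n))}"
    then have "length (face i \<sigma>) = Suc (Suc n)"
      using len by simp
    then show "(-1) ^ i * chain_inc (face i \<sigma>) \<rho>
        = (\<Sum>j<Suc (Suc n). (-1) ^ (i + j) * (if face j (face i \<sigma>) = \<rho> then 1 else 0))"
      unfolding chain_inc_def sum_distrib_left by (intro sum.cong) (simp_all add: power_add)
  qed
  also have "\<dots> = 0"
    using len by (rule alternating_double_face_sum)
  finally show ?thesis .
qed

lemma sum_cone: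
  assumes fin: "finite P" and x: "x \<in> P"
    and U: "\<And>\<tau>. U \<tau> \<noteq> 0 \<Longrightarrow> \<tau> \<in> pchains P m \<and> hd \<tau> \<subseteq> x"
  shows "(\<Sum>\<tau>\<in>pchains P (Suc m). cone x U \<tau> * f \<tau>) = (\<Sum>\<tau>\<in>pchains P m. U \<tau> * f (x # \<tau>))"
proof -
  let ?Q = "{\<tau>\<in>pchains P m. hd \<tau> \<subseteq> x}"
  have "(\<Sum>\<tau>\<in>pchains P m. U \<tau> * f (x # \<tau>)) = (\<Sum>\<tau>\<in>?Q. U \<tau> * f (x # \<tau>))"
    by (rule sum.mono_neutral_right) (use finite_pchains[OF fin] U in auto)
  also have "\<dots> = (\<Sum>\<tau>\<in>Cons x ` ?Q. cone x U \<tau> * f \<tau>)"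
    by (subst sum.reindex) (auto simp: inj_on_def)
  also have "\<dots> = (\<Sum>\<tau>\<in>pchains P (Suc m). cone x U \<tau> * f \<tau>)"
  proof (rule sum.mono_neutral_left)
    show "Cons x ` ?Q \<subseteq> pchains P (Suc m)"
      using x by (auto simp: Cons_in_pchains)
    show "\<forall>\<tau>\<in>pchains P (Suc m) - Cons x ` ?Q. cone x U \<tau> * f \<tau> = 0"
    proof
      fix \<tau> assume \<tau>: "\<tau> \<in> pchains P (Suc m) - Cons x ` ?Q"
      show "cone x U \<tau> * f \<tau> = 0"
      proof (cases \<tau>)
        case (Cons y \<tau>')
        then show ?thesis
          using \<tau> U[of \<tau>'] by (cases "y = x") auto
      qed simp
    qed
  qed (use finite_pchains[OF fin] in auto)
  finally show ?thesis by simp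
qed

lemma cone_support:
  assumes x: "x \<in> P" and U: "\<And>\<tau>. U \<tau> \<noteq> 0 \<Longrightarrow> \<tau> \<in> pchains P m \<and> hd \<tau> \<subseteq> x"
    and nz: "cone x U \<rho> \<noteq> 0"
  shows "\<rho> \<in> pchains P (Suc m) \<and> hd \<rho> = x"
proof (cases \<rho>)
  case (Cons y \<rho>')
  then have "y = x" "U \<rho>' \<noteq> 0"
    using nz by (auto split: if_splits)
  then show ?thesis
    using U[of \<rho>'] x Cons by (simp add: Cons_in_pchains)
qed (use nz in simp)

lemma int_bd_diff: "int_bd P n (\<lambda>\<rho>. f \<rho> - g \<rho>) \<rho>' = int_bd P n f \<rho>' - int_bd P n g \<rho>'"
  by (simp add: int_bd_def left_diff_distrib sum_subtractf)

lemma int_bd_delta: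
  assumes "finite P" "\<sigma> \<in> pchains P n"
  shows "int_bd P n (\<lambda>\<rho>. if \<sigma> = \<rho> then 1 else 0) \<rho>' = chain_inc \<sigma> \<rho>'"
  using assms finite_pchains[OF assms(1)] by (simp add: int_bd_def if_distrib [of "\<lambda>x. x * _"] sum.delta cong: if_cong)

lemma sum_chain_inc_delta:
  assumes "finite P" "\<sigma> \<in> pchains P (Suc n)"
  shows "(\<Sum>\<tau>\<in>pchains P n. chain_inc \<sigma> \<tau> * (if \<tau> = \<rho> then 1 else 0)) = chain_inc \<sigma> \<rho>"
proof (cases "\<rho> \<in> pchains P n")
  case True
  then show ?thesis
    using finite_pchains[OF assms(1)] by (simp add: if_distrib [of "\<lambda>x. _ * x"] sum.delta' cong: if_cong)
next
  case False
  then show ?thesis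
    using chain_inc_not_pchains[OF assms(2) False] by (auto intro: sum.neutral)
qed

lemma int_bd_cone:
  assumes fin: "finite P" and x: "x \<in> P"
    and U: "\<And>\<tau>. U \<tau> \<noteq> 0 \<Longrightarrow> \<tau> \<in> pchains P m \<and> hd \<tau> \<subseteq> x"
  shows "int_bd P (Suc m) (cone x U) \<rho> = U \<rho> - cone x (int_bd P m U) \<rho>"
proof -
  have "int_bd P (Suc m) (cone x U) \<rho> = (\<Sum>\<tau>\<in>pchains P m. U \<tau> * chain_inc (x # \<tau>) \<rho>)"
    unfolding int_bd_def by (rule sum_cone[OF fin x U])
  also have "\<dots> = (\<Sum>\<tau>\<in>pchains P m. U \<tau> * (if \<tau> = \<rho> then 1 else 0))
      - (\<Sum>\<tau>\<in>pchains P m. U \<tau> * (\<Sum>i<length \<tau>. if x # face i \<tau> = \<rho> then (-1) ^ i else 0))"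
    by (simp add: chain_inc_Cons right_diff_distrib sum_subtractf)
  also have "(\<Sum>\<tau>\<in>pchains P m. U \<tau> * (if \<tau> = \<rho> then 1 else 0)) = U \<rho>"
    using U finite_pchains[OF fin] by (cases "\<rho> \<in> pchains P m") (auto simp: if_distrib cong: if_cong)
  also have "(\<Sum>\<tau>\<in>pchains P m. U \<tau> * (\<Sum>i<length \<tau>. if x # face i \<tau> = \<rho> then (-1) ^ i else 0))
      = cone x (int_bd P m U) \<rho>"
    by (cases \<rho>) (auto simp: int_bd_def chain_inc_def)
  finally show ?thesis .
qed

lemma int_bd_cone_cycle:
  assumes "finite P" "x \<in> P" "\<And>\<tau>. U \<tau> \<noteq> 0 \<Longrightarrow> \<tau> \<in> pchains P m \<and> hd \<tau> \<subseteq> x"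
    and "\<And>\<rho>. int_bd P m U \<rho> = 0"
  shows "int_bd P (Suc m) (cone x U) \<rho> = U \<rho>"
  using int_bd_cone[OF assms(1-3)] assms(4) by (cases \<rho>) auto

section \<open>Cellular incidence numbers\<close>

definition cell_inc :: "'a::linorder set \<Rightarrow> 'a set \<Rightarrow> int" where
  "cell_inc y w = (if w \<subseteq> y \<and> card (y - w) = 1 then (-1) ^ card {b\<in>w. b < Min (y - w)} else 0)"

lemma cell_inc_subset: "cell_inc y w \<noteq> 0 \<Longrightarrow> w \<subseteq> y"
  by (auto simp: cell_inc_def split: if_splits)

lemma cell_inc_insert: "a \<notin> w \<Longrightarrow> cell_inc (insert a w) w = (-1) ^ card {b\<in>w. b < a}"
proof -
  assume "a \<notin> w"
  then have "insert a w - w = {a}"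
    by auto
  then show ?thesis
    by (simp add: cell_inc_def subset_insertI)
qed

lemma cell_inc_Diff_singleton: "a \<in> y \<Longrightarrow> cell_inc y (y - {a}) = (-1) ^ card {b\<in>y - {a}. b < a}"
proof -
  assume "a \<in> y"
  then have "y - (y - {a}) = {a}"
    by auto
  then show ?thesis
    by (simp add: cell_inc_def)
qed

lemma cell_inc_nonzero:
  assumes "cell_inc y w \<noteq> 0"
  obtains a where "a \<notin> w" "y = insert a w"
proof -
  have "w \<subseteq> y" "card (y - w) = 1"
    using assms by (auto simp: cell_inc_def split: if_splits)
  then obtain a where "y - w = {a}"
    by (meson card_1_singletonE)
  then show thesis
    using \<open>w \<subseteq> y\<close> that by blast
qed

lemma cell_inc_nonzero_mem:
  assumes "cell_inc y w \<noteq> 0" "m \<in> y" "w \<noteq> y - {m}"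
  shows "m \<in> w \<and> w \<subseteq> y"
proof -
  obtain a where "a \<notin> w" "y = insert a w"
    using assms(1) by (rule cell_inc_nonzero)
  then show ?thesis
    using assms(2,3) by auto
qed

lemma sorted_wrt_less_below_nth:
  fixes ms :: "'a::linorder list"
  assumes strict: "sorted_wrt (<) ms" and i: "i < length ms"
  shows "{b \<in> set ms. b < ms ! i} = set (take i ms)"
proof (intro equalityI subsetI)
  fix b assume "b \<in> {b \<in> set ms. b < ms ! i}"
  then obtain j where j: "j < length ms" "b = ms ! j" "b < ms ! i"
    by (auto simp: in_set_conv_nth)
  have "j < i"
  proof (rule ccontr)
    assume "\<not> j < i"
    then have "ms ! i \<le> ms ! j"
      using strict_sorted_imp_sorted[OF strict] j(1) by (intro sorted_nth_mono) auto
    then show False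
      using j by simp
  qed
  then show "b \<in> set (take i ms)"
    using j by (auto simp: in_set_conv_nth)
next
  fix b assume "b \<in> set (take i ms)"
  then obtain j where j: "j < i" "b = ms ! j"
    using i by (auto simp: in_set_conv_nth)
  then show "b \<in> {b \<in> set ms. b < ms ! i}"
    using sorted_wrt_nth_less[OF strict j(1) i] i by simp
qed

lemma cell_inc_set_face:
  assumes strict: "sorted_wrt (<) ms" and i: "i < length ms"
  shows "cell_inc (set ms) (set (face i ms)) = (-1) ^ i"
proof -
  have d: "distinct ms"
    using strict by (simp add: strict_sorted_iff)
  have "{b \<in> set ms - {ms ! i}. b < ms ! i} = set (take i ms)"
    using sorted_wrt_less_below_nth[OF strict i] by auto
  moreover have "card (set (take i ms)) = i"
    using d i by (simp add: distinct_card)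
  ultimately show ?thesis
    unfolding set_face_distinct[OF d i] cell_inc_Diff_singleton[OF nth_mem[OF i]] by simp
qed

lemma set_face_eq_iff:
  assumes d: "distinct ms" and ij: "i < length ms" "j < length ms"
  shows "set (face i ms) = set (face j ms) \<longleftrightarrow> i = j"
proof
  assume "set (face i ms) = set (face j ms)"
  then have "ms ! j \<notin> set ms - {ms ! i}"
    using d ij by (simp add: set_face_distinct)
  then have "ms ! i = ms ! j"
    using nth_mem[OF ij(2)] by simp
  then show "i = j"
    using d ij nth_eq_iff_index_eq by blast
qed simp

lemma cell_inc_set_nonzero:
  assumes d: "distinct ms" and nz: "cell_inc (set ms) w \<noteq> 0"
  obtains i where "i < length ms" "set (face i ms) = w"
proof -
  obtain a where a: "a \<notin> w" "set ms = insert a w"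
    using nz by (rule cell_inc_nonzero)
  then obtain i where "i < length ms" "ms ! i = a"
    by (metis in_set_conv_nth insertI1)
  moreover have "set (face i ms) = w"
    using calculation a d by (auto simp: set_face_distinct)
  ultimately show thesis
    using that by blast
qed

lemma alternating_face_sum_strict:
  assumes strict: "sorted_wrt (<) ms"
  shows "(\<Sum>i<length ms. (-1) ^ i * (if set (face i ms) = w then 1 else 0)) = cell_inc (set ms) w"
proof -
  have d: "distinct ms"
    using strict by (simp add: strict_sorted_iff)
  show ?thesis
  proof (cases "\<exists>i0<length ms. set (face i0 ms) = w")
    case True
    then obtain i0 where i0: "i0 < length ms" "set (face i0 ms) = w"
      by blast
    then have "(\<Sum>i<length ms. (-1) ^ i * (if set (face i ms) = w then 1 else 0))
        = (\<Sum>i<length ms. if i = i0 then (-1) ^ i else (0::int))"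
      using set_face_eq_iff[OF d] by (intro sum.cong) auto
    also have "\<dots> = cell_inc (set ms) w"
      using i0 cell_inc_set_face[OF strict i0(1)] by simp
    finally show ?thesis .
  next
    case False
    then have "cell_inc (set ms) w = 0"
      using cell_inc_set_nonzero[OF d] by metis
    then show ?thesis
      using False by (simp add: sum.neutral)
  qed
qed

lemma not_sorted_wrt_face_adjacent_eq:
  fixes ms :: "'a::linorder list"
  assumes j: "Suc j < length ms" "ms ! j = ms ! Suc j" and i: "i < length ms" "i \<noteq> j" "i \<noteq> Suc j"
  shows "\<not> sorted_wrt (<) (face i ms)"
proof
  assume s: "sorted_wrt (<) (face i ms)"
  have lf: "length (face i ms) = length ms - 1"
    using i by simp
  consider "i < j" | "Suc j < i"
    using i by linarith
  then show False
  proof cases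
    case 1
    have "face i ms ! (j - 1) = ms ! j" "face i ms ! j = ms ! Suc j"
      using 1 i j by (auto simp: face_nth)
    moreover have "face i ms ! (j - 1) < face i ms ! j"
      using 1 j lf by (intro sorted_wrt_nth_less[OF s]) auto
    ultimately show False
      using j by simp
  next
    case 2
    have "face i ms ! j = ms ! j" "face i ms ! Suc j = ms ! Suc j"
      using 2 i j by (auto simp: face_nth)
    moreover have "face i ms ! j < face i ms ! Suc j"
      using 2 i lf by (intro sorted_wrt_nth_less[OF s]) auto
    ultimately show False
      using j by simp
  qed
qed

text \<open>If two adjacent entries agree, only the two faces deleting one of them can be strictly
  sorted, and these two faces coincide but carry opposite signs.\<close>

lemma alternating_face_sum_adjacent_eq:
  fixes ms :: "'a::linorder list"
  assumes j: "Suc j < length ms" "ms ! j = ms ! Suc j"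
  shows "(\<Sum>i<length ms. (-1) ^ i * (if sorted_wrt (<) (face i ms) \<and> Q (face i ms) then 1 else 0)) = (0::int)"
proof -
  have "face j ms = face (Suc j) ms"
    by (rule nth_equalityI) (use j in \<open>auto simp: face_nth dest: less_antisym\<close>)
  moreover have "(\<Sum>i<length ms. (-1) ^ i * (if sorted_wrt (<) (face i ms) \<and> Q (face i ms) then 1 else 0))
      = (\<Sum>i\<in>{j, Suc j}. (-1) ^ i * (if sorted_wrt (<) (face i ms) \<and> Q (face i ms) then 1 else (0::int)))"
    by (rule sum.mono_neutral_right) (use j not_sorted_wrt_face_adjacent_eq[OF j] in auto)
  ultimately show ?thesis
    by simp
qed

lemma alternating_face_sum_sorted:
  assumes "sorted ms"
  shows "(\<Sum>i<length ms. (-1) ^ i * (if sorted_wrt (<) (face i ms) \<and> set (face i ms) = w then 1 else 0))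
       = (if sorted_wrt (<) ms then cell_inc (set ms) w else 0)"
proof (cases "sorted_wrt (<) ms")
  case True
  then show ?thesis
    using alternating_face_sum_strict[OF True, of w] by (simp add: sorted_wrt_face)
next
  case False
  have "\<exists>j. Suc j < length ms \<and> ms ! j = ms ! Suc j"
  proof (rule ccontr)
    assume "\<nexists>j. Suc j < length ms \<and> ms ! j = ms ! Suc j"
    then have "\<forall>j. Suc j < length ms \<longrightarrow> ms ! j < ms ! Suc j"
      using assms by (metis le_neq_trans lessI sorted_iff_nth_mono_less)
    then show False
      using False by (simp add: sorted_wrt_iff_nth_Suc_transp)
  qed
  then obtain j where "Suc j < length ms" "ms ! j = ms ! Suc j"
    by blast
  then show ?thesis
    using False alternating_face_sum_adjacent_eq[of j ms "\<lambda>l. set l = w"] by simp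
qed

section \<open>The comparison maps between chains and cells\<close>

definition psi_coeff :: "'a::linorder set list \<Rightarrow> 'a set \<Rightarrow> int" where
  "psi_coeff \<sigma> y = (if sorted_wrt (<) (map Min \<sigma>) \<and> set (map Min \<sigma>) = y then 1 else 0)"

primrec suffix_sets :: "'a list \<Rightarrow> 'a set list" where
  "suffix_sets [] = []"
| "suffix_sets (x # xs) = set (x # xs) # suffix_sets xs"

lemma length_suffix_sets [simp]: "length (suffix_sets xs) = length xs"
  by (induction xs) auto

lemma set_suffix_sets: "z \<in> set (suffix_sets xs) \<Longrightarrow> z \<noteq> {} \<and> z \<subseteq> set xs"
  by (induction xs) auto

lemma sorted_wrt_suffix_sets: "sorted_wrt (\<lambda>a b. b \<subseteq> a) (suffix_sets xs)"
  by (induction xs) (auto dest: set_suffix_sets)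

lemma map_Min_suffix_sets: "sorted xs \<Longrightarrow> map Min (suffix_sets xs) = (xs::'a::linorder list)"
  by (induction xs) (auto intro: Min_eqI)

locale finite_boolean =
  fixes A :: "'a::linorder set"
  assumes finite_A: "finite A"
begin

abbreviation B0 :: "'a set set" where
  "B0 \<equiv> Pow A - {{}}"

lemma finite_B0: "finite B0"
  using finite_A by simp

lemma finite_chains: "finite (pchains B0 n)"
  using finite_B0 by (rule finite_pchains)

lemma finite_cells: "finite (cells A n)"
  unfolding cells_def using finite_A by simp

lemma cells_in_B0: "y \<in> cells A n \<Longrightarrow> y \<in> B0"
  unfolding cells_def by auto

lemma finite_cell: "y \<in> cells A n \<Longrightarrow> finite y"
  unfolding cells_def using finite_A finite_subset by blast

lemma Min_mem_B0: "x \<in> B0 \<Longrightarrow> Min x \<in> x"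
  using finite_A by (auto intro: Min_in finite_subset)

lemma singleton_in_chains_0:
  assumes "y \<in> cells A n"
  shows "[y] \<in> pchains B0 0"
  using cells_in_B0[OF assms] by (simp add: pchains_0)

lemma sorted_map_Min:
  assumes \<sigma>: "\<sigma> \<in> pchains B0 n"
  shows "sorted (map Min \<sigma>)"
proof -
  have "sorted_wrt (\<lambda>x y. Min x \<le> Min y) \<sigma>"
  proof (rule sorted_wrt_mono_rel[of _ "\<lambda>x y. y \<subseteq> x"])
    fix x y assume xy: "x \<in> set \<sigma>" "y \<in> set \<sigma>" "y \<subseteq> x"
    have "set \<sigma> \<subseteq> B0"
      using \<sigma> by (simp add: pchains_def)
    then have "finite x" "y \<noteq> {}"
      using xy(1,2) finite_subset[OF _ finite_A] by auto
    then show "Min x \<le> Min y"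
      using xy(3) by (simp add: Min_antimono)
  qed (use \<sigma> in \<open>simp add: pchains_sorted_wrt\<close>)
  then show ?thesis
    by (simp add: sorted_wrt_map)
qed

lemma set_map_Min_subset_hd:
  assumes \<sigma>: "\<sigma> \<in> pchains B0 n"
  shows "set (map Min \<sigma>) \<subseteq> hd \<sigma>"
proof
  fix m assume "m \<in> set (map Min \<sigma>)"
  then obtain x where x: "x \<in> set \<sigma>" "m = Min x"
    by auto
  have "x \<in> B0"
    using \<sigma> x(1) by (auto simp: pchains_def)
  then have "m \<in> x"
    using x(2) Min_mem_B0 by simp
  then show "m \<in> hd \<sigma>"
    using pchains_subset_hd[OF \<sigma> x(1)] by auto
qed

lemma set_map_Min_in_cells:
  assumes \<sigma>: "\<sigma> \<in> pchains B0 n" and strict: "sorted_wrt (<) (map Min \<sigma>)"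
  shows "set (map Min \<sigma>) \<in> cells A n"
proof -
  have "card (set (map Min \<sigma>)) = Suc n"
    using strict pchains_length[OF \<sigma>] distinct_card[of "map Min \<sigma>"] by (simp add: strict_sorted_iff)
  moreover have "set (map Min \<sigma>) \<subseteq> A"
    using set_map_Min_subset_hd[OF \<sigma>] pchains_hd_mem[OF \<sigma>] by auto
  ultimately show ?thesis
    by (simp add: cells_def)
qed

lemma sum_psi_coeff:
  assumes \<sigma>: "\<sigma> \<in> pchains B0 n"
  shows "(\<Sum>y\<in>cells A n. psi_coeff \<sigma> y * g y)
    = (if sorted_wrt (<) (map Min \<sigma>) then g (set (map Min \<sigma>)) else 0)"
proof (cases "sorted_wrt (<) (map Min \<sigma>)")
  case True
  then show ?thesis
    using set_map_Min_in_cells[OF \<sigma> True] finite_cells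
    by (simp add: psi_coeff_def if_distrib [of "\<lambda>x. x * g _"] sum.delta' cong: if_cong)
qed (simp add: psi_coeff_def)

lemma sum_psi_coeff_0:
  assumes "\<tau> \<in> pchains B0 0"
  shows "(\<Sum>w\<in>cells A 0. psi_coeff \<tau> w) = 1"
  using sum_psi_coeff[OF assms, of "\<lambda>_. 1"] assms by (auto simp: pchains_0)

text \<open>The alternating sum over the faces of a chain is computed on its list of minima.\<close>

lemma psi_coeff_chain:
  assumes \<sigma>: "\<sigma> \<in> pchains B0 (Suc n)"
  shows "(\<Sum>y\<in>cells A (Suc n). psi_coeff \<sigma> y * cell_inc y w)
    = (\<Sum>\<tau>\<in>pchains B0 n. chain_inc \<sigma> \<tau> * psi_coeff \<tau> w)"
proof -
  have "(\<Sum>\<tau>\<in>pchains B0 n. chain_inc \<sigma> \<tau> * psi_coeff \<tau> w)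
      = (\<Sum>i<length (map Min \<sigma>). (-1) ^ i * psi_coeff (face i \<sigma>) w)"
    using sum_chain_inc[OF finite_B0 \<sigma>] pchains_length[OF \<sigma>] by simp
  also have "\<dots> = (\<Sum>i<length (map Min \<sigma>). (-1) ^ i *
      (if sorted_wrt (<) (face i (map Min \<sigma>)) \<and> set (face i (map Min \<sigma>)) = w then 1 else 0))"
    by (simp add: psi_coeff_def map_face)
  also have "\<dots> = (if sorted_wrt (<) (map Min \<sigma>) then cell_inc (set (map Min \<sigma>)) w else 0)"
    by (rule alternating_face_sum_sorted[OF sorted_map_Min[OF \<sigma>]])
  finally show ?thesis
    by (simp add: sum_psi_coeff[OF \<sigma>])
qed

lemma suffix_sets_in_chains:
  assumes y: "y \<in> cells A n"
  shows "suffix_sets (sorted_list_of_set y) \<in> pchains B0 n"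
proof -
  let ?ys = "sorted_list_of_set y"
  have y': "finite y" "card y = Suc n" "y \<subseteq> A"
    using y finite_cell[OF y] by (auto simp: cells_def)
  have "z \<in> B0" if "z \<in> set (suffix_sets ?ys)" for z
    using set_suffix_sets[OF that] y' by auto
  then show ?thesis
    using sorted_wrt_suffix_sets[of ?ys] y' by (auto simp: pchains_sorted_wrt)
qed

lemma psi_coeff_suffix_sets:
  assumes y: "y \<in> cells A n"
  shows "psi_coeff (suffix_sets (sorted_list_of_set y)) y' = (if y' = y then 1 else 0)"
  using finite_cell[OF y] by (auto simp: psi_coeff_def map_Min_suffix_sets)

text \<open>The cellular boundary squares to zero because \<open>\<psi>\<close> is a chain map hitting every cell.\<close>

lemma cell_inc_as_chain:
  assumes y: "y \<in> cells A (Suc n)"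
  shows "cell_inc y w = (\<Sum>\<tau>\<in>pchains B0 n. chain_inc (suffix_sets (sorted_list_of_set y)) \<tau> * psi_coeff \<tau> w)"
proof -
  have "cell_inc y w = (\<Sum>y'\<in>cells A (Suc n). psi_coeff (suffix_sets (sorted_list_of_set y)) y' * cell_inc y' w)"
    using y finite_cells by (simp add: psi_coeff_suffix_sets[OF y] sum_delta_mult)
  also have "\<dots> = (\<Sum>\<tau>\<in>pchains B0 n. chain_inc (suffix_sets (sorted_list_of_set y)) \<tau> * psi_coeff \<tau> w)"
    by (rule psi_coeff_chain[OF suffix_sets_in_chains[OF y]])
  finally show ?thesis .
qed

lemma cell_inc_square_zero:
  assumes y: "y \<in> cells A (Suc (Suc m))"
  shows "(\<Sum>w\<in>cells A (Suc m). cell_inc y w * cell_inc w w') = 0"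
proof -
  let ?\<sigma> = "suffix_sets (sorted_list_of_set y)"
  have "(\<Sum>w\<in>cells A (Suc m). cell_inc y w * cell_inc w w')
     = (\<Sum>w\<in>cells A (Suc m). (\<Sum>\<tau>\<in>pchains B0 (Suc m). chain_inc ?\<sigma> \<tau> * psi_coeff \<tau> w) * cell_inc w w')"
    by (simp add: cell_inc_as_chain[OF y])
  also have "\<dots> = (\<Sum>\<tau>\<in>pchains B0 (Suc m). chain_inc ?\<sigma> \<tau> * (\<Sum>w\<in>cells A (Suc m). psi_coeff \<tau> w * cell_inc w w'))"
    by (rule sum_mult_assoc)
  also have "\<dots> = (\<Sum>\<tau>\<in>pchains B0 (Suc m). chain_inc ?\<sigma> \<tau> * (\<Sum>\<tau>'\<in>pchains B0 m. chain_inc \<tau> \<tau>' * psi_coeff \<tau>' w'))"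
    by (intro sum.cong refl) (simp add: psi_coeff_chain)
  also have "\<dots> = (\<Sum>\<tau>'\<in>pchains B0 m. (\<Sum>\<tau>\<in>pchains B0 (Suc m). chain_inc ?\<sigma> \<tau> * chain_inc \<tau> \<tau>') * psi_coeff \<tau>' w')"
    by (rule sum_mult_assoc [symmetric])
  also have "\<dots> = 0"
    using chain_inc_square_zero[OF finite_B0 suffix_sets_in_chains[OF y]] by simp
  finally show ?thesis .
qed

lemma sum_cell_inc_0:
  assumes y: "y \<in> cells A 1"
  shows "(\<Sum>w\<in>cells A 0. cell_inc y w) = 0"
proof -
  let ?\<sigma> = "suffix_sets (sorted_list_of_set y)"
  have "(\<Sum>w\<in>cells A 0. cell_inc y w)
      = (\<Sum>w\<in>cells A 0. (\<Sum>\<tau>\<in>pchains B0 0. chain_inc ?\<sigma> \<tau> * psi_coeff \<tau> w) * 1)"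
    using cell_inc_as_chain[of y 0] y by simp
  also have "\<dots> = (\<Sum>\<tau>\<in>pchains B0 0. chain_inc ?\<sigma> \<tau> * (\<Sum>w\<in>cells A 0. psi_coeff \<tau> w * 1))"
    by (rule sum_mult_assoc)
  also have "\<dots> = (\<Sum>\<tau>\<in>pchains B0 0. chain_inc ?\<sigma> \<tau> * 1)"
    by (intro sum.cong refl) (simp add: sum_psi_coeff_0)
  also have "\<dots> = (\<Sum>i<Suc (Suc 0). (-1) ^ i * 1)"
    using suffix_sets_in_chains[of y 1] y by (intro sum_chain_inc[OF finite_B0]) simp
  finally show ?thesis
    by simp
qed

end

primrec phi_coeff :: "'a::linorder set \<Rightarrow> nat \<Rightarrow> 'a set \<Rightarrow> 'a set list \<Rightarrow> int" where
  "phi_coeff A 0 y = (\<lambda>\<tau>. if \<tau> = [y] then 1 else 0)"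
| "phi_coeff A (Suc n) y = cone y (\<lambda>\<tau>. \<Sum>w\<in>cells A n. cell_inc y w * phi_coeff A n w \<tau>)"

context finite_boolean
begin

lemma phi_coeff_support:
  "y \<in> cells A n \<Longrightarrow> phi_coeff A n y \<tau> \<noteq> 0 \<Longrightarrow> \<tau> \<in> pchains B0 n \<and> hd \<tau> = y"
proof (induction n arbitrary: y \<tau>)
  case 0
  then show ?case
    using singleton_in_chains_0 by (auto split: if_splits)
next
  case (Suc n)
  show ?case
  proof (rule cone_support[where U = "\<lambda>\<tau>. \<Sum>w\<in>cells A n. cell_inc y w * phi_coeff A n w \<tau>"])
    show "y \<in> B0"
      using Suc.prems(1) by (rule cells_in_B0)
    show "cone y (\<lambda>\<tau>. \<Sum>w\<in>cells A n. cell_inc y w * phi_coeff A n w \<tau>) \<tau> \<noteq> 0"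
      using Suc.prems(2) by simp
    fix \<tau>' assume nz: "(\<Sum>w\<in>cells A n. cell_inc y w * phi_coeff A n w \<tau>') \<noteq> 0"
    obtain w where "w \<in> cells A n" "cell_inc y w \<noteq> 0" "phi_coeff A n w \<tau>' \<noteq> 0"
      using sum_mult_nonzero[OF nz] by blast
    then show "\<tau>' \<in> pchains B0 n \<and> hd \<tau>' \<subseteq> y"
      using Suc.IH cell_inc_subset by blast
  qed
qed

lemma phi_bd_support:
  assumes "(\<Sum>w\<in>cells A n. cell_inc y w * phi_coeff A n w \<tau>) \<noteq> 0"
  shows "\<tau> \<in> pchains B0 n \<and> hd \<tau> \<subseteq> y"
proof -
  obtain w where "w \<in> cells A n" "cell_inc y w \<noteq> 0" "phi_coeff A n w \<tau> \<noteq> 0"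
    using sum_mult_nonzero[OF assms] by blast
  then show ?thesis
    using phi_coeff_support cell_inc_subset by blast
qed

lemma int_bd_phi_bd:
  "int_bd B0 m (\<lambda>\<tau>. \<Sum>w\<in>cells A n. cell_inc y w * phi_coeff A n w \<tau>) \<rho>
    = (\<Sum>w\<in>cells A n. cell_inc y w * int_bd B0 m (phi_coeff A n w) \<rho>)"
  unfolding int_bd_def by (rule sum_mult_assoc)

lemma int_bd_phi_coeff_0:
  assumes "w \<in> cells A 0"
  shows "int_bd B0 0 (phi_coeff A 0 w) \<rho> = (if \<rho> = [] then 1 else 0)"
  using singleton_in_chains_0[OF assms] finite_chains by (simp add: int_bd_0 sum.delta')

lemma int_bd_phi_coeff:
  assumes "y \<in> cells A (Suc n)"
  shows "int_bd B0 (Suc n) (phi_coeff A (Suc n) y) \<rho> = (\<Sum>w\<in>cells A n. cell_inc y w * phi_coeff A n w \<rho>)"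
  using assms
proof (induction n arbitrary: y \<rho>)
  case 0
  have "int_bd B0 0 (\<lambda>\<tau>. \<Sum>w\<in>cells A 0. cell_inc y w * phi_coeff A 0 w \<tau>) \<rho>'
      = (\<Sum>w\<in>cells A 0. cell_inc y w * (if \<rho>' = [] then 1 else 0))" for \<rho>'
    unfolding int_bd_phi_bd by (intro sum.cong refl) (simp add: int_bd_phi_coeff_0 del: phi_coeff.simps)
  also have "\<dots> \<rho>' = 0" for \<rho>'
    using sum_cell_inc_0 0 by (simp add: sum_distrib_right [symmetric])
  finally have cycle: "int_bd B0 0 (\<lambda>\<tau>. \<Sum>w\<in>cells A 0. cell_inc y w * phi_coeff A 0 w \<tau>) \<rho>' = 0"
    for \<rho>' .
  show ?case
    unfolding phi_coeff.simps(2)[of A 0 y]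
    by (rule int_bd_cone_cycle[OF finite_B0 cells_in_B0[OF 0] phi_bd_support cycle])
next
  case (Suc m)
  have "int_bd B0 (Suc m) (\<lambda>\<tau>. \<Sum>w\<in>cells A (Suc m). cell_inc y w * phi_coeff A (Suc m) w \<tau>) \<rho>'
      = (\<Sum>w\<in>cells A (Suc m). cell_inc y w * (\<Sum>w'\<in>cells A m. cell_inc w w' * phi_coeff A m w' \<rho>'))" for \<rho>'
    unfolding int_bd_phi_bd by (intro sum.cong refl) (simp add: Suc.IH del: phi_coeff.simps)
  also have "\<dots> \<rho>' = (\<Sum>w'\<in>cells A m. (\<Sum>w\<in>cells A (Suc m). cell_inc y w * cell_inc w w') * phi_coeff A m w' \<rho>')" for \<rho>'
    by (rule sum_mult_assoc [symmetric])
  also have "\<dots> \<rho>' = 0" for \<rho>'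
    using cell_inc_square_zero[OF Suc.prems] by simp
  finally have cycle: "int_bd B0 (Suc m) (\<lambda>\<tau>. \<Sum>w\<in>cells A (Suc m). cell_inc y w * phi_coeff A (Suc m) w \<tau>) \<rho>' = 0"
    for \<rho>' .
  show ?case
    unfolding phi_coeff.simps(2)[of A "Suc m" y]
    by (rule int_bd_cone_cycle[OF finite_B0 cells_in_B0[OF Suc.prems] phi_bd_support cycle])
qed

lemma cells_Diff:
  assumes y: "y \<in> cells A (Suc n)" and a: "a \<in> y"
  shows "y - {a} \<in> cells A n"
proof -
  have "card (y - {a}) = Suc n"
    using card_Diff_singleton[OF a] y by (simp add: cells_def)
  moreover have "y - {a} \<subseteq> A"
    using y by (auto simp: cells_def)
  ultimately show ?thesis
    by (simp add: cells_def)
qed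

lemma cells_Diff_Min:
  assumes "y \<in> cells A (Suc n)"
  shows "y - {Min y} \<in> cells A n"
  using cells_Diff[OF assms Min_mem_B0[OF cells_in_B0[OF assms]]] .

lemma cell_inc_Diff_Min:
  assumes "y \<in> cells A (Suc n)"
  shows "cell_inc y (y - {Min y}) = 1"
proof -
  have "\<not> b < Min y" if "b \<in> y" for b
    using Min_le[OF finite_cell[OF assms] that] by simp
  then have empty: "{b \<in> y - {Min y}. b < Min y} = {}"
    by blast
  show ?thesis
    unfolding cell_inc_Diff_singleton[OF Min_mem_B0[OF cells_in_B0[OF assms]]] empty by simp
qed

lemma psi_coeff_Cons_Min_eq: "Min z = Min x \<Longrightarrow> psi_coeff (x # z # \<tau>) y' = 0"
  by (simp add: psi_coeff_def)

lemma psi_coeff_Cons_Min: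
  assumes x: "x \<in> B0" and \<tau>: "\<tau> \<in> pchains B0 n" and hd: "hd \<tau> \<subseteq> x - {Min x}"
  shows "psi_coeff (x # \<tau>) y' = (if Min x \<in> y' then psi_coeff \<tau> (y' - {Min x}) else 0)"
proof -
  have sub: "set (map Min \<tau>) \<subseteq> x - {Min x}"
    using set_map_Min_subset_hd[OF \<tau>] hd by blast
  have "finite x"
    using x finite_A finite_subset by blast
  then have gt: "\<forall>m\<in>set (map Min \<tau>). Min x < m"
    using sub by (fastforce intro: le_neq_trans)
  then have "Min x \<notin> set (map Min \<tau>)"
    by blast
  then show ?thesis
    using gt unfolding psi_coeff_def by auto
qed

lemma sum_phi_psi_coeff_Suc:
  assumes y: "y \<in> cells A (Suc n)"
  shows "(\<Sum>\<tau>\<in>pchains B0 (Suc n). phi_coeff A (Suc n) y \<tau> * psi_coeff \<tau> y')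
    = (\<Sum>w\<in>cells A n. cell_inc y w * (\<Sum>\<tau>\<in>pchains B0 n. phi_coeff A n w \<tau> * psi_coeff (y # \<tau>) y'))"
proof -
  have "(\<Sum>\<tau>\<in>pchains B0 (Suc n). phi_coeff A (Suc n) y \<tau> * psi_coeff \<tau> y')
      = (\<Sum>\<tau>\<in>pchains B0 n. (\<Sum>w\<in>cells A n. cell_inc y w * phi_coeff A n w \<tau>) * psi_coeff (y # \<tau>) y')"
    unfolding phi_coeff.simps(2)[of A n y]
    by (rule sum_cone[OF finite_B0 cells_in_B0[OF y] phi_bd_support])
  then show ?thesis
    by (simp only: sum_mult_assoc)
qed

lemma sum_phi_psi_coeff_Cons_Min_mem:
  assumes w: "w \<in> cells A n" and y: "y \<in> B0" and sub: "w \<subseteq> y" "Min y \<in> w"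
  shows "(\<Sum>\<tau>\<in>pchains B0 n. phi_coeff A n w \<tau> * psi_coeff (y # \<tau>) y') = 0"
proof (rule sum.neutral, rule ballI)
  fix \<tau> assume "\<tau> \<in> pchains B0 n"
  show "phi_coeff A n w \<tau> * psi_coeff (y # \<tau>) y' = 0"
  proof (cases "phi_coeff A n w \<tau> = 0")
    case False
    then have "\<tau> \<in> pchains B0 n" "hd \<tau> = w"
      using phi_coeff_support[OF w] by auto
    then obtain \<tau>' where \<tau>': "\<tau> = w # \<tau>'"
      by (metis list.collapse pchains_not_Nil)
    have "finite y"
      using y finite_A finite_subset by blast
    then have "Min w = Min y"
      using sub finite_subset by (intro Min_eqI) auto
    then show ?thesis
      unfolding \<tau>' by (simp add: psi_coeff_Cons_Min_eq)
  qed simp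
qed

lemma sum_phi_psi_coeff_Cons_Diff_Min:
  assumes y: "y \<in> cells A (Suc n)"
  shows "(\<Sum>\<tau>\<in>pchains B0 n. phi_coeff A n (y - {Min y}) \<tau> * psi_coeff (y # \<tau>) y')
    = (if Min y \<in> y' then (\<Sum>\<tau>\<in>pchains B0 n. phi_coeff A n (y - {Min y}) \<tau> * psi_coeff \<tau> (y' - {Min y})) else 0)"
proof -
  have "phi_coeff A n (y - {Min y}) \<tau> * psi_coeff (y # \<tau>) y'
      = (if Min y \<in> y' then phi_coeff A n (y - {Min y}) \<tau> * psi_coeff \<tau> (y' - {Min y}) else 0)" for \<tau>
    using phi_coeff_support[OF cells_Diff_Min[OF y], of \<tau>] psi_coeff_Cons_Min[OF cells_in_B0[OF y]]
    by (cases "phi_coeff A n (y - {Min y}) \<tau> = 0") auto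
  then show ?thesis
    by simp
qed

lemma sum_phi_psi_coeff_Suc_Diff_Min:
  assumes y: "y \<in> cells A (Suc n)"
  shows "(\<Sum>\<tau>\<in>pchains B0 (Suc n). phi_coeff A (Suc n) y \<tau> * psi_coeff \<tau> y')
    = (if Min y \<in> y' then (\<Sum>\<tau>\<in>pchains B0 n. phi_coeff A n (y - {Min y}) \<tau> * psi_coeff \<tau> (y' - {Min y})) else 0)"
proof -
  define w0 where "w0 = y - {Min y}"
  have w0: "w0 \<in> cells A n"
    unfolding w0_def using y by (rule cells_Diff_Min)
  have "cell_inc y w * (\<Sum>\<tau>\<in>pchains B0 n. phi_coeff A n w \<tau> * psi_coeff (y # \<tau>) y') = 0"
    if w: "w \<in> cells A n - {w0}" for w
  proof (cases "cell_inc y w = 0")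
    case False
    then have "Min y \<in> w \<and> w \<subseteq> y"
      using w Min_mem_B0[OF cells_in_B0[OF y]] by (intro cell_inc_nonzero_mem) (auto simp: w0_def)
    then show ?thesis
      using w sum_phi_psi_coeff_Cons_Min_mem[OF _ cells_in_B0[OF y]] by simp
  qed simp
  then have "(\<Sum>\<tau>\<in>pchains B0 (Suc n). phi_coeff A (Suc n) y \<tau> * psi_coeff \<tau> y')
      = cell_inc y w0 * (\<Sum>\<tau>\<in>pchains B0 n. phi_coeff A n w0 \<tau> * psi_coeff (y # \<tau>) y')"
    unfolding sum_phi_psi_coeff_Suc[OF y] using w0 finite_cells
    by (simp add: sum.remove sum.neutral)
  then show ?thesis
    using cell_inc_Diff_Min[OF y] sum_phi_psi_coeff_Cons_Diff_Min[OF y]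
    unfolding w0_def by simp
qed

text \<open>\<open>\<psi> \<circ> \<phi> = id\<close>: among the chains of \<open>\<phi> y\<close>, only those starting with \<open>y \<supset> y - {Min y}\<close>
  have strictly increasing minima.\<close>

lemma sum_phi_psi_coeff:
  assumes "y \<in> cells A n" "y' \<in> cells A n"
  shows "(\<Sum>\<tau>\<in>pchains B0 n. phi_coeff A n y \<tau> * psi_coeff \<tau> y') = (if y = y' then 1 else 0)"
  using assms
proof (induction n arbitrary: y y')
  case 0
  then obtain a where "y = {a}"
    by (auto simp: cells_def card_Suc_eq)
  moreover have "(\<Sum>\<tau>\<in>pchains B0 0. phi_coeff A 0 y \<tau> * psi_coeff \<tau> y') = psi_coeff [y] y'"
    using singleton_in_chains_0[OF 0(1)] finite_chains by (simp add: sum_delta_mult)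
  ultimately show ?case
    by (auto simp: psi_coeff_def)
next
  case (Suc n)
  have "(\<Sum>\<tau>\<in>pchains B0 (Suc n). phi_coeff A (Suc n) y \<tau> * psi_coeff \<tau> y')
      = (if Min y \<in> y' then (\<Sum>\<tau>\<in>pchains B0 n. phi_coeff A n (y - {Min y}) \<tau> * psi_coeff \<tau> (y' - {Min y})) else 0)"
    by (rule sum_phi_psi_coeff_Suc_Diff_Min[OF Suc.prems(1)])
  also have "\<dots> = (if Min y \<in> y' then (if y - {Min y} = y' - {Min y} then 1 else 0) else 0)"
    using Suc.IH[OF cells_Diff_Min[OF Suc.prems(1)] cells_Diff[OF Suc.prems(2)]] by simp
  also have "\<dots> = (if y = y' then 1 else 0)"
  proof -
    have "Min y \<in> y' \<and> y - {Min y} = y' - {Min y} \<longleftrightarrow> y = y'"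
      using Min_mem_B0[OF cells_in_B0[OF Suc.prems(1)]] by blast
    then show ?thesis
      by (cases "Min y \<in> y'") simp_all
  qed
  finally show ?case .
qed

end

section \<open>The chain homotopy\<close>

text \<open>Matrices are composed as \<open>\<Sum>\<tau>. k \<sigma> \<tau> * l \<tau> \<rho>\<close>, first \<open>k\<close>, then \<open>l\<close>. Thus \<open>phi_psi_coeff\<close> is
  the matrix of \<open>\<phi> \<circ> \<psi>\<close> and \<open>htpy_bd_coeff\<close> that of \<open>K \<circ> \<partial>\<close>.\<close>

definition phi_psi_coeff :: "'a::linorder set \<Rightarrow> nat \<Rightarrow> 'a set list \<Rightarrow> 'a set list \<Rightarrow> int" where
  "phi_psi_coeff A n \<sigma> \<rho> = (\<Sum>y\<in>cells A n. psi_coeff \<sigma> y * phi_coeff A n y \<rho>)"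

text \<open>\<open>K \<sigma>\<close> is the cone with apex \<open>hd \<sigma>\<close> over the cycle \<open>\<sigma> - \<phi> (\<psi> \<sigma>) - K (\<partial>\<sigma>)\<close>.\<close>

primrec htpy_coeff :: "'a::linorder set \<Rightarrow> nat \<Rightarrow> 'a set list \<Rightarrow> 'a set list \<Rightarrow> int" where
  "htpy_coeff A 0 \<sigma> = cone (hd \<sigma>) (\<lambda>\<rho>. (if \<sigma> = \<rho> then 1 else 0) - phi_psi_coeff A 0 \<sigma> \<rho>)"
| "htpy_coeff A (Suc n) \<sigma> = cone (hd \<sigma>) (\<lambda>\<rho>. (if \<sigma> = \<rho> then 1 else 0) - phi_psi_coeff A (Suc n) \<sigma> \<rho>
     - (\<Sum>\<tau>\<in>pchains (Pow A - {{}}) n. chain_inc \<sigma> \<tau> * htpy_coeff A n \<tau> \<rho>))"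

definition htpy_bd_coeff :: "'a::linorder set \<Rightarrow> nat \<Rightarrow> 'a set list \<Rightarrow> 'a set list \<Rightarrow> int" where
  "htpy_bd_coeff A n \<sigma> \<rho> = (case n of 0 \<Rightarrow> 0
     | Suc m \<Rightarrow> \<Sum>\<tau>\<in>pchains (Pow A - {{}}) m. chain_inc \<sigma> \<tau> * htpy_coeff A m \<tau> \<rho>)"

lemma htpy_coeff_cone:
  "htpy_coeff A n \<sigma>
    = cone (hd \<sigma>) (\<lambda>\<rho>. (if \<sigma> = \<rho> then 1 else 0) - phi_psi_coeff A n \<sigma> \<rho> - htpy_bd_coeff A n \<sigma> \<rho>)"
  by (cases n) (simp_all add: htpy_bd_coeff_def)

context finite_boolean
begin

lemma phi_psi_coeff_support:
  assumes \<sigma>: "\<sigma> \<in> pchains B0 n" and nz: "phi_psi_coeff A n \<sigma> \<rho> \<noteq> 0"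
  shows "\<rho> \<in> pchains B0 n \<and> hd \<rho> \<subseteq> hd \<sigma>"
proof -
  obtain y where y: "y \<in> cells A n" "psi_coeff \<sigma> y \<noteq> 0" "phi_coeff A n y \<rho> \<noteq> 0"
    using sum_mult_nonzero[OF nz[unfolded phi_psi_coeff_def]] by blast
  then have "y \<subseteq> hd \<sigma>"
    using set_map_Min_subset_hd[OF \<sigma>] by (simp add: psi_coeff_def split: if_splits)
  then show ?thesis
    using phi_coeff_support[OF y(1,3)] by simp
qed

lemma htpy_source_support:
  assumes \<sigma>: "\<sigma> \<in> pchains B0 n"
    and bd: "\<And>\<rho>. htpy_bd_coeff A n \<sigma> \<rho> \<noteq> 0 \<Longrightarrow> \<rho> \<in> pchains B0 n \<and> hd \<rho> \<subseteq> hd \<sigma>"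
    and nz: "(if \<sigma> = \<rho> then 1 else 0) - phi_psi_coeff A n \<sigma> \<rho> - htpy_bd_coeff A n \<sigma> \<rho> \<noteq> 0"
  shows "\<rho> \<in> pchains B0 n \<and> hd \<rho> \<subseteq> hd \<sigma>"
proof (cases "\<sigma> = \<rho>")
  case False
  then have "phi_psi_coeff A n \<sigma> \<rho> \<noteq> 0 \<or> htpy_bd_coeff A n \<sigma> \<rho> \<noteq> 0"
    using nz by auto
  then show ?thesis
    using phi_psi_coeff_support[OF \<sigma>] bd by blast
qed (use \<sigma> in simp)

lemma htpy_coeff_support_step:
  assumes \<sigma>: "\<sigma> \<in> pchains B0 n"
    and bd: "\<And>\<rho>. htpy_bd_coeff A n \<sigma> \<rho> \<noteq> 0 \<Longrightarrow> \<rho> \<in> pchains B0 n \<and> hd \<rho> \<subseteq> hd \<sigma>"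
    and nz: "htpy_coeff A n \<sigma> \<rho> \<noteq> 0"
  shows "\<rho> \<in> pchains B0 (Suc n) \<and> hd \<rho> = hd \<sigma>"
proof -
  let ?U = "\<lambda>\<rho>. (if \<sigma> = \<rho> then 1 else 0) - phi_psi_coeff A n \<sigma> \<rho> - htpy_bd_coeff A n \<sigma> \<rho>"
  show ?thesis
  proof (rule cone_support)
    show "hd \<sigma> \<in> B0"
      using \<sigma> by (rule pchains_hd_mem)
    show "cone (hd \<sigma>) ?U \<rho> \<noteq> 0"
      using nz unfolding htpy_coeff_cone .
    fix \<tau> assume "?U \<tau> \<noteq> 0"
    then show "\<tau> \<in> pchains B0 n \<and> hd \<tau> \<subseteq> hd \<sigma>"
      using htpy_source_support[OF \<sigma> bd, of \<tau>] by blast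
  qed
qed

lemma htpy_bd_coeff_Suc_support:
  assumes K: "\<And>\<tau> \<rho>. \<tau> \<in> pchains B0 m \<Longrightarrow> htpy_coeff A m \<tau> \<rho> \<noteq> 0 \<Longrightarrow> \<rho> \<in> pchains B0 (Suc m) \<and> hd \<rho> = hd \<tau>"
    and \<sigma>: "\<sigma> \<in> pchains B0 (Suc m)" and nz: "htpy_bd_coeff A (Suc m) \<sigma> \<rho> \<noteq> 0"
  shows "\<rho> \<in> pchains B0 (Suc m) \<and> hd \<rho> \<subseteq> hd \<sigma>"
proof -
  obtain \<tau> where \<tau>: "\<tau> \<in> pchains B0 m" "chain_inc \<sigma> \<tau> \<noteq> 0" "htpy_coeff A m \<tau> \<rho> \<noteq> 0"
    using sum_mult_nonzero[OF nz[unfolded htpy_bd_coeff_def nat.case]] by blast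
  then show ?thesis
    using K[OF \<tau>(1,3)] chain_inc_hd_subset[OF \<sigma> \<tau>(2)] by simp
qed

lemma htpy_coeff_support:
  "\<sigma> \<in> pchains B0 n \<Longrightarrow> htpy_coeff A n \<sigma> \<rho> \<noteq> 0 \<Longrightarrow> \<rho> \<in> pchains B0 (Suc n) \<and> hd \<rho> = hd \<sigma>"
proof (induction n arbitrary: \<sigma> \<rho>)
  case 0
  show ?case
    by (rule htpy_coeff_support_step[OF 0(1) _ 0(2)]) (simp add: htpy_bd_coeff_def)
next
  case (Suc m)
  show ?case
    by (rule htpy_coeff_support_step[OF Suc.prems(1) htpy_bd_coeff_Suc_support[OF Suc.IH Suc.prems(1)] Suc.prems(2)])
qed

lemma htpy_bd_coeff_support:
  assumes "\<sigma> \<in> pchains B0 n" "htpy_bd_coeff A n \<sigma> \<rho> \<noteq> 0"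
  shows "\<rho> \<in> pchains B0 n \<and> hd \<rho> \<subseteq> hd \<sigma>"
proof (cases n)
  case (Suc m)
  then show ?thesis
    using htpy_bd_coeff_Suc_support[OF htpy_coeff_support] assms by blast
qed (use assms in \<open>simp add: htpy_bd_coeff_def\<close>)

lemma int_bd_phi_psi_coeff:
  assumes \<sigma>: "\<sigma> \<in> pchains B0 (Suc n)"
  shows "int_bd B0 (Suc n) (phi_psi_coeff A (Suc n) \<sigma>) \<rho>
    = (\<Sum>\<tau>\<in>pchains B0 n. chain_inc \<sigma> \<tau> * phi_psi_coeff A n \<tau> \<rho>)"
proof -
  have "int_bd B0 (Suc n) (phi_psi_coeff A (Suc n) \<sigma>) \<rho>
      = (\<Sum>y\<in>cells A (Suc n). psi_coeff \<sigma> y * int_bd B0 (Suc n) (phi_coeff A (Suc n) y) \<rho>)"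
    unfolding int_bd_def phi_psi_coeff_def by (rule sum_mult_assoc)
  also have "\<dots> = (\<Sum>y\<in>cells A (Suc n). psi_coeff \<sigma> y * (\<Sum>w\<in>cells A n. cell_inc y w * phi_coeff A n w \<rho>))"
    by (intro sum.cong refl) (simp add: int_bd_phi_coeff del: phi_coeff.simps)
  also have "\<dots> = (\<Sum>w\<in>cells A n. (\<Sum>y\<in>cells A (Suc n). psi_coeff \<sigma> y * cell_inc y w) * phi_coeff A n w \<rho>)"
    by (rule sum_mult_assoc [symmetric])
  also have "\<dots> = (\<Sum>w\<in>cells A n. (\<Sum>\<tau>\<in>pchains B0 n. chain_inc \<sigma> \<tau> * psi_coeff \<tau> w) * phi_coeff A n w \<rho>)"
    by (simp only: psi_coeff_chain[OF \<sigma>])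
  also have "\<dots> = (\<Sum>\<tau>\<in>pchains B0 n. chain_inc \<sigma> \<tau> * phi_psi_coeff A n \<tau> \<rho>)"
    unfolding phi_psi_coeff_def by (rule sum_mult_assoc)
  finally show ?thesis .
qed

lemma sum_phi_psi_coeff_0:
  assumes \<sigma>: "\<sigma> \<in> pchains B0 0"
  shows "(\<Sum>\<rho>\<in>pchains B0 0. phi_psi_coeff A 0 \<sigma> \<rho>) = 1"
proof -
  have "(\<Sum>\<rho>\<in>pchains B0 0. phi_coeff A 0 y \<rho> * 1) = 1" if "y \<in> cells A 0" for y
    using singleton_in_chains_0[OF that] finite_chains by (simp add: sum.delta')
  then have "(\<Sum>\<rho>\<in>pchains B0 0. phi_psi_coeff A 0 \<sigma> \<rho> * 1) = (\<Sum>y\<in>cells A 0. psi_coeff \<sigma> y)"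
    unfolding phi_psi_coeff_def sum_mult_assoc by (intro sum.cong refl) (simp del: phi_coeff.simps)
  then show ?thesis
    using sum_psi_coeff_0[OF \<sigma>] by simp
qed

lemma sum_chain_inc_htpy_bd_coeff:
  assumes \<sigma>: "\<sigma> \<in> pchains B0 (Suc n)"
  shows "(\<Sum>\<tau>\<in>pchains B0 n. chain_inc \<sigma> \<tau> * htpy_bd_coeff A n \<tau> \<rho>) = 0"
proof (cases n)
  case (Suc m)
  have "(\<Sum>\<tau>\<in>pchains B0 n. chain_inc \<sigma> \<tau> * htpy_bd_coeff A n \<tau> \<rho>)
      = (\<Sum>\<tau>'\<in>pchains B0 m. (\<Sum>\<tau>\<in>pchains B0 (Suc m). chain_inc \<sigma> \<tau> * chain_inc \<tau> \<tau>') * htpy_coeff A m \<tau>' \<rho>)"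
    unfolding Suc htpy_bd_coeff_def nat.case by (rule sum_mult_assoc [symmetric])
  also have "\<dots> = 0"
    using chain_inc_square_zero[OF finite_B0] \<sigma> Suc by simp
  finally show ?thesis .
qed (simp add: htpy_bd_coeff_def)

lemma int_bd_htpy_coeff_cycle:
  assumes \<sigma>: "\<sigma> \<in> pchains B0 n"
    and cycle: "\<And>\<rho>'. int_bd B0 n (\<lambda>\<rho>. (if \<sigma> = \<rho> then 1 else 0) - phi_psi_coeff A n \<sigma> \<rho> - htpy_bd_coeff A n \<sigma> \<rho>) \<rho>' = 0"
  shows "int_bd B0 (Suc n) (htpy_coeff A n \<sigma>) \<rho> = (if \<sigma> = \<rho> then 1 else 0) - phi_psi_coeff A n \<sigma> \<rho> - htpy_bd_coeff A n \<sigma> \<rho>"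
  unfolding htpy_coeff_cone
proof (rule int_bd_cone_cycle[OF finite_B0 pchains_hd_mem[OF \<sigma>] _ cycle])
  fix \<tau> assume "(if \<sigma> = \<tau> then 1 else 0) - phi_psi_coeff A n \<sigma> \<tau> - htpy_bd_coeff A n \<sigma> \<tau> \<noteq> 0"
  then show "\<tau> \<in> pchains B0 n \<and> hd \<tau> \<subseteq> hd \<sigma>"
    using htpy_source_support[OF \<sigma> htpy_bd_coeff_support[OF \<sigma>], of \<tau>] by blast
qed

lemma int_bd_htpy_source_0:
  assumes \<sigma>: "\<sigma> \<in> pchains B0 0"
  shows "int_bd B0 0 (\<lambda>\<rho>. (if \<sigma> = \<rho> then 1 else 0) - phi_psi_coeff A 0 \<sigma> \<rho> - htpy_bd_coeff A 0 \<sigma> \<rho>) \<rho>' = 0"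
  using \<sigma> finite_chains sum_phi_psi_coeff_0[OF \<sigma>]
  by (simp add: int_bd_0 htpy_bd_coeff_def sum_subtractf)

lemma int_bd_htpy_source_Suc:
  assumes \<sigma>: "\<sigma> \<in> pchains B0 (Suc m)"
    and IH: "\<And>\<tau> \<rho>. \<tau> \<in> pchains B0 m \<Longrightarrow> int_bd B0 (Suc m) (htpy_coeff A m \<tau>) \<rho>
        = (if \<tau> = \<rho> then 1 else 0) - phi_psi_coeff A m \<tau> \<rho> - htpy_bd_coeff A m \<tau> \<rho>"
  shows "int_bd B0 (Suc m)
    (\<lambda>\<rho>. (if \<sigma> = \<rho> then 1 else 0) - phi_psi_coeff A (Suc m) \<sigma> \<rho> - htpy_bd_coeff A (Suc m) \<sigma> \<rho>) \<rho>' = 0"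
proof -
  have "int_bd B0 (Suc m) (htpy_bd_coeff A (Suc m) \<sigma>) \<rho>'
      = (\<Sum>\<tau>\<in>pchains B0 m. chain_inc \<sigma> \<tau> * int_bd B0 (Suc m) (htpy_coeff A m \<tau>) \<rho>')"
    unfolding int_bd_def htpy_bd_coeff_def nat.case by (rule sum_mult_assoc)
  also have "\<dots> = (\<Sum>\<tau>\<in>pchains B0 m. chain_inc \<sigma> \<tau> * (if \<tau> = \<rho>' then 1 else 0))
      - (\<Sum>\<tau>\<in>pchains B0 m. chain_inc \<sigma> \<tau> * phi_psi_coeff A m \<tau> \<rho>')
      - (\<Sum>\<tau>\<in>pchains B0 m. chain_inc \<sigma> \<tau> * htpy_bd_coeff A m \<tau> \<rho>')"
    by (simp add: IH right_diff_distrib sum_subtractf)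
  also have "\<dots> = chain_inc \<sigma> \<rho>' - int_bd B0 (Suc m) (phi_psi_coeff A (Suc m) \<sigma>) \<rho>'"
    using sum_chain_inc_delta[OF finite_B0 \<sigma>] sum_chain_inc_htpy_bd_coeff[OF \<sigma>]
    by (simp add: int_bd_phi_psi_coeff[OF \<sigma>])
  finally show ?thesis
    using int_bd_delta[OF finite_B0 \<sigma>] by (simp add: int_bd_diff)
qed

lemma int_bd_htpy_coeff:
  "\<sigma> \<in> pchains B0 n \<Longrightarrow> int_bd B0 (Suc n) (htpy_coeff A n \<sigma>) \<rho>
    = (if \<sigma> = \<rho> then 1 else 0) - phi_psi_coeff A n \<sigma> \<rho> - htpy_bd_coeff A n \<sigma> \<rho>"
proof (induction n arbitrary: \<sigma> \<rho>)
  case 0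
  show ?case
    by (rule int_bd_htpy_coeff_cycle[OF 0 int_bd_htpy_source_0[OF 0]])
next
  case (Suc m)
  show ?case
    by (rule int_bd_htpy_coeff_cycle[OF Suc.prems int_bd_htpy_source_Suc[OF Suc.prems Suc.IH]])
qed

end

section \<open>Integer kernels acting on sheaf-valued chains\<close>

definition kernel_op :: "('r::comm_ring_1 \<Rightarrow> 'm::ab_group_add \<Rightarrow> 'm) \<Rightarrow> ('a set \<Rightarrow> 'a set \<Rightarrow> 'm \<Rightarrow> 'm)
    \<Rightarrow> ('i \<Rightarrow> 'a set) \<Rightarrow> 'i set \<Rightarrow> ('j \<Rightarrow> 'a set) \<Rightarrow> 'j set \<Rightarrow> ('i \<Rightarrow> 'j \<Rightarrow> int) \<Rightarrow> ('i \<Rightarrow> 'm) \<Rightarrow> 'j \<Rightarrow> 'm" where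
  "kernel_op s res t I u J k c =
     (\<lambda>\<tau>. if \<tau> \<in> J then \<Sum>\<sigma>\<in>I. s (of_int (k \<sigma> \<tau>)) (res (t \<sigma>) (u \<tau>) (c \<sigma>)) else 0)"

definition kernel_restricts :: "('i \<Rightarrow> 'j \<Rightarrow> int) \<Rightarrow> ('i \<Rightarrow> 'a set) \<Rightarrow> 'i set \<Rightarrow> ('j \<Rightarrow> 'a set) \<Rightarrow> 'j set \<Rightarrow> bool" where
  "kernel_restricts k t I u J \<longleftrightarrow> (\<forall>\<sigma>\<in>I. \<forall>\<tau>\<in>J. k \<sigma> \<tau> \<noteq> 0 \<longrightarrow> u \<tau> \<subseteq> t \<sigma>)"

lemma kernel_op_out: "\<tau> \<notin> J \<Longrightarrow> kernel_op s res t I u J k c \<tau> = 0"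
  by (simp add: kernel_op_def)

lemma kernel_op_in:
  "\<tau> \<in> J \<Longrightarrow> kernel_op s res t I u J k c \<tau> = (\<Sum>\<sigma>\<in>I. s (of_int (k \<sigma> \<tau>)) (res (t \<sigma>) (u \<tau>) (c \<sigma>)))"
  by (simp add: kernel_op_def)

lemma kernel_op_cong:
  "(\<And>\<sigma> \<tau>. \<sigma> \<in> I \<Longrightarrow> \<tau> \<in> J \<Longrightarrow> k \<sigma> \<tau> = k' \<sigma> \<tau>) \<Longrightarrow> kernel_op s res t I u J k c = kernel_op s res t I u J k' c"
  by (auto simp: kernel_op_def fun_eq_iff intro!: sum.cong)

locale boolean_sheaf = finite_boolean A + module s
  for A :: "'a::linorder set" and s :: "'r::comm_ring_1 \<Rightarrow> 'm::ab_group_add \<Rightarrow> 'm" +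
  fixes F :: "'a set \<Rightarrow> 'm set" and res :: "'a set \<Rightarrow> 'a set \<Rightarrow> 'm \<Rightarrow> 'm"
  assumes sheaf: "is_sheaf s (Pow A) F res"
begin

definition sections_on :: "('i \<Rightarrow> 'a set) \<Rightarrow> 'i set \<Rightarrow> ('i \<Rightarrow> 'm) \<Rightarrow> bool" where
  "sections_on t I c \<longleftrightarrow> (\<forall>\<sigma>\<in>I. t \<sigma> \<subseteq> A \<and> c \<sigma> \<in> F (t \<sigma>))"

lemma zero_mem_F: "x \<subseteq> A \<Longrightarrow> 0 \<in> F x"
  using sheaf by (simp add: is_sheaf_def)

lemma add_mem_F: "x \<subseteq> A \<Longrightarrow> u \<in> F x \<Longrightarrow> v \<in> F x \<Longrightarrow> u + v \<in> F x"
  using sheaf by (simp add: is_sheaf_def)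

lemma scale_mem_F: "x \<subseteq> A \<Longrightarrow> u \<in> F x \<Longrightarrow> s r u \<in> F x"
  using sheaf by (simp add: is_sheaf_def)

lemma sum_mem_F: "x \<subseteq> A \<Longrightarrow> (\<And>i. i \<in> I \<Longrightarrow> f i \<in> F x) \<Longrightarrow> sum f I \<in> F x"
  by (induction I rule: infinite_finite_induct) (simp_all add: zero_mem_F add_mem_F)

lemma res_mem: "x \<subseteq> y \<Longrightarrow> y \<subseteq> A \<Longrightarrow> v \<in> F y \<Longrightarrow> res y x v \<in> F x"
  using sheaf unfolding is_sheaf_def by (meson Pow_iff order_trans)

lemma res_add: "x \<subseteq> y \<Longrightarrow> y \<subseteq> A \<Longrightarrow> u \<in> F y \<Longrightarrow> v \<in> F y \<Longrightarrow> res y x (u + v) = res y x u + res y x v"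
  using sheaf unfolding is_sheaf_def lin_on_def by (meson Pow_iff order_trans)

lemma res_scale: "x \<subseteq> y \<Longrightarrow> y \<subseteq> A \<Longrightarrow> u \<in> F y \<Longrightarrow> res y x (s r u) = s r (res y x u)"
  using sheaf unfolding is_sheaf_def lin_on_def by (meson Pow_iff order_trans)

lemma res_zero: "x \<subseteq> y \<Longrightarrow> y \<subseteq> A \<Longrightarrow> res y x 0 = 0"
  using res_add[of x y 0 0] zero_mem_F[of y] by simp

lemma res_sum:
  "x \<subseteq> y \<Longrightarrow> y \<subseteq> A \<Longrightarrow> (\<And>i. i \<in> I \<Longrightarrow> f i \<in> F y) \<Longrightarrow> res y x (sum f I) = (\<Sum>i\<in>I. res y x (f i))"
proof (induction I rule: infinite_finite_induct)
  case (insert i I)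
  then show ?case
    using res_add[of x y "f i" "sum f I"] sum_mem_F[of y I f] by simp
qed (simp_all add: res_zero)

lemma res_id: "x \<subseteq> A \<Longrightarrow> v \<in> F x \<Longrightarrow> res x x v = v"
  using sheaf unfolding is_sheaf_def by blast

lemma res_res: "x \<subseteq> y \<Longrightarrow> y \<subseteq> z \<Longrightarrow> z \<subseteq> A \<Longrightarrow> v \<in> F z \<Longrightarrow> res y x (res z y v) = res z x v"
  using sheaf unfolding is_sheaf_def by (meson Pow_iff order_trans)

lemma scale_res_mem:
  assumes "x \<subseteq> A" "v \<in> F x" "y \<subseteq> A" "k \<noteq> 0 \<Longrightarrow> y \<subseteq> x"
  shows "s (of_int k) (res x y v) \<in> F y"
  using assms zero_mem_F res_mem scale_mem_F by (cases "k = 0") auto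

lemma sections_on_kernel_op:
  assumes "sections_on t I c" "\<forall>\<tau>\<in>J. u \<tau> \<subseteq> A" "kernel_restricts k t I u J"
  shows "sections_on u J (kernel_op s res t I u J k c)"
  unfolding sections_on_def
proof
  fix \<tau> assume \<tau>: "\<tau> \<in> J"
  have "kernel_op s res t I u J k c \<tau> \<in> F (u \<tau>)"
    unfolding kernel_op_in[OF \<tau>] using assms \<tau>
    by (intro sum_mem_F scale_res_mem) (auto simp: sections_on_def kernel_restricts_def)
  then show "u \<tau> \<subseteq> A \<and> kernel_op s res t I u J k c \<tau> \<in> F (u \<tau>)"
    using assms(2) \<tau> by simp
qed

lemma res_kernel_op:
  assumes c: "sections_on t I c" and k: "kernel_restricts k t I u J"
    and \<tau>: "\<tau> \<in> J" "u \<tau> \<subseteq> A" and x: "x \<subseteq> u \<tau>"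
  shows "res (u \<tau>) x (kernel_op s res t I u J k c \<tau>) = (\<Sum>\<sigma>\<in>I. s (of_int (k \<sigma> \<tau>)) (res (t \<sigma>) x (c \<sigma>)))"
proof -
  have mem: "s (of_int (k \<sigma> \<tau>)) (res (t \<sigma>) (u \<tau>) (c \<sigma>)) \<in> F (u \<tau>)" if "\<sigma> \<in> I" for \<sigma>
    using c k \<tau> that by (intro scale_res_mem) (auto simp: sections_on_def kernel_restricts_def)
  have "res (u \<tau>) x (s (of_int (k \<sigma> \<tau>)) (res (t \<sigma>) (u \<tau>) (c \<sigma>))) = s (of_int (k \<sigma> \<tau>)) (res (t \<sigma>) x (c \<sigma>))"
    if \<sigma>: "\<sigma> \<in> I" for \<sigma>
  proof (cases "k \<sigma> \<tau> = 0")
    case False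
    then have "u \<tau> \<subseteq> t \<sigma>" "t \<sigma> \<subseteq> A" "c \<sigma> \<in> F (t \<sigma>)"
      using c k \<sigma> \<tau> by (auto simp: sections_on_def kernel_restricts_def)
    then show ?thesis
      using x \<tau> by (simp add: res_scale res_mem res_res)
  qed (use x \<tau> res_zero in simp)
  then show ?thesis
    using \<tau> x by (simp add: kernel_op_in res_sum mem)
qed

lemma kernel_op_comp:
  assumes "finite J" and c: "sections_on t I c" and "\<forall>\<tau>\<in>J. u \<tau> \<subseteq> A"
    and k: "kernel_restricts k t I u J" and l: "kernel_restricts l u J v L"
  shows "kernel_op s res u J v L l (kernel_op s res t I u J k c)
    = kernel_op s res t I v L (\<lambda>\<sigma> \<rho>. \<Sum>\<tau>\<in>J. k \<sigma> \<tau> * l \<tau> \<rho>) c"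
proof
  fix \<rho>
  show "kernel_op s res u J v L l (kernel_op s res t I u J k c) \<rho>
    = kernel_op s res t I v L (\<lambda>\<sigma> \<rho>. \<Sum>\<tau>\<in>J. k \<sigma> \<tau> * l \<tau> \<rho>) c \<rho>"
  proof (cases "\<rho> \<in> L")
    case \<rho>: True
    have "s (of_int (l \<tau> \<rho>)) (res (u \<tau>) (v \<rho>) (kernel_op s res t I u J k c \<tau>))
       = (\<Sum>\<sigma>\<in>I. s (of_int (k \<sigma> \<tau> * l \<tau> \<rho>)) (res (t \<sigma>) (v \<rho>) (c \<sigma>)))" if \<tau>: "\<tau> \<in> J" for \<tau>
    proof (cases "l \<tau> \<rho> = 0")
      case False
      then have "v \<rho> \<subseteq> u \<tau>"
        using l \<tau> \<rho> by (auto simp: kernel_restricts_def)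
      then show ?thesis
        using assms \<tau> by (simp add: res_kernel_op scale_sum_right mult.commute)
    qed simp
    then show ?thesis
      using \<rho> by (simp add: kernel_op_in scale_sum_left sum.swap [of _ J] cong: sum.cong)
  qed (simp add: kernel_op_out)
qed

lemma kernel_op_diff_kernel:
  "kernel_op s res t I u J (\<lambda>\<sigma> \<tau>. k \<sigma> \<tau> - k' \<sigma> \<tau>) c = kernel_op s res t I u J k c - kernel_op s res t I u J k' c"
  by (auto simp: kernel_op_def fun_eq_iff scale_left_diff_distrib sum_subtractf)

lemma kernel_op_delta:
  assumes "finite I" "sections_on t I c" "\<And>\<sigma>. \<sigma> \<notin> I \<Longrightarrow> c \<sigma> = 0"
  shows "kernel_op s res t I t I (\<lambda>\<sigma> \<tau>. if \<sigma> = \<tau> then 1 else 0) c = c"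
proof
  fix \<tau>
  show "kernel_op s res t I t I (\<lambda>\<sigma> \<tau>. if \<sigma> = \<tau> then 1 else 0) c \<tau> = c \<tau>"
  proof (cases "\<tau> \<in> I")
    case True
    have "kernel_op s res t I t I (\<lambda>\<sigma> \<tau>. if \<sigma> = \<tau> then 1 else 0) c \<tau>
        = (\<Sum>\<sigma>\<in>I. if \<sigma> = \<tau> then res (t \<sigma>) (t \<tau>) (c \<sigma>) else 0)"
      unfolding kernel_op_in[OF True] by (rule sum.cong) auto
    also have "\<dots> = c \<tau>"
      using assms True res_id by (simp add: sections_on_def)
    finally show ?thesis .
  qed (use assms in \<open>simp add: kernel_op_out\<close>)
qed

lemma kernel_op_add:
  assumes "sections_on t I c" "sections_on t I c'" "kernel_restricts k t I u J"
  shows "kernel_op s res t I u J k (c + c') = kernel_op s res t I u J k c + kernel_op s res t I u J k c'"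
proof
  fix \<tau>
  have "s (of_int (k \<sigma> \<tau>)) (res (t \<sigma>) (u \<tau>) (c \<sigma> + c' \<sigma>))
      = s (of_int (k \<sigma> \<tau>)) (res (t \<sigma>) (u \<tau>) (c \<sigma>)) + s (of_int (k \<sigma> \<tau>)) (res (t \<sigma>) (u \<tau>) (c' \<sigma>))"
    if "\<sigma> \<in> I" "\<tau> \<in> J" for \<sigma>
    using assms that res_add[of "u \<tau>" "t \<sigma>"]
    by (cases "k \<sigma> \<tau> = 0") (auto simp: sections_on_def kernel_restricts_def scale_right_distrib)
  then show "kernel_op s res t I u J k (c + c') \<tau> = (kernel_op s res t I u J k c + kernel_op s res t I u J k c') \<tau>"
    by (simp add: kernel_op_def sum.distrib)
qed

lemma kernel_op_scale:
  assumes "sections_on t I c" "kernel_restricts k t I u J"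
  shows "kernel_op s res t I u J k (fscale s r c) = fscale s r (kernel_op s res t I u J k c)"
proof
  fix \<tau>
  have "s (of_int (k \<sigma> \<tau>)) (res (t \<sigma>) (u \<tau>) (s r (c \<sigma>))) = s r (s (of_int (k \<sigma> \<tau>)) (res (t \<sigma>) (u \<tau>) (c \<sigma>)))"
    if "\<sigma> \<in> I" "\<tau> \<in> J" for \<sigma>
    using assms that res_scale[of "u \<tau>" "t \<sigma>"]
    by (cases "k \<sigma> \<tau> = 0") (auto simp: sections_on_def kernel_restricts_def mult.commute)
  then show "kernel_op s res t I u J k (fscale s r c) \<tau> = fscale s r (kernel_op s res t I u J k c) \<tau>"
    by (simp add: kernel_op_def fscale_def scale_sum_right)
qed

lemma kernel_op_zero:
  assumes "\<forall>\<sigma>\<in>I. t \<sigma> \<subseteq> A" "kernel_restricts k t I u J"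
  shows "kernel_op s res t I u J k 0 = 0"
proof
  fix \<tau>
  have "s (of_int (k \<sigma> \<tau>)) (res (t \<sigma>) (u \<tau>) 0) = 0" if "\<sigma> \<in> I" "\<tau> \<in> J" for \<sigma>
    using assms that res_zero[of "u \<tau>" "t \<sigma>"] by (cases "k \<sigma> \<tau> = 0") (auto simp: kernel_restricts_def)
  then show "kernel_op s res t I u J k 0 \<tau> = 0 \<tau>"
    by (simp add: kernel_op_def)
qed

end

section \<open>The sheaf complex and the cellular complex\<close>

lemma sum_insert_reindex:
  assumes "finite A" "finite C" "\<And>a. a \<in> A - w \<Longrightarrow> insert a w \<notin> C \<Longrightarrow> g (insert a w) = 0"
    and "\<And>y. y \<in> C - (\<lambda>a. insert a w) ` (A - w) \<Longrightarrow> g y = 0"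
  shows "(\<Sum>y\<in>C. g y) = (\<Sum>a\<in>A - w. g (insert a w))"
proof -
  let ?Y = "C \<inter> (\<lambda>a. insert a w) ` (A - w)"
  have "(\<Sum>y\<in>C. g y) = (\<Sum>y\<in>?Y. g y)"
    using assms(2,4) by (intro sum.mono_neutral_right) auto
  also have "\<dots> = (\<Sum>y\<in>(\<lambda>a. insert a w) ` (A - w). g y)"
    using assms(1,3) by (intro sum.mono_neutral_left) (auto simp: finite_subset)
  also have "\<dots> = (\<Sum>a\<in>A - w. g (insert a w))"
    by (rule sum.reindex_cong[where l = "\<lambda>a. insert a w"]) (auto simp: inj_on_def)
  finally show ?thesis .
qed

context boolean_sheaf
begin

lemma alt_eq_scale: "alt i v = s (of_int ((-1) ^ i)) v"
  by (simp add: alt_def)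

lemma S_car_sections_on: "c \<in> S_car B0 F n \<Longrightarrow> sections_on hd (pchains B0 n) c"
  unfolding S_car_def sections_on_def using pchains_hd_mem by blast

lemma C_car_sections_on: "e \<in> C_car A F n \<Longrightarrow> sections_on id (cells A n) e"
  unfolding C_car_def sections_on_def cells_def by auto

lemma hd_chains_subset: "\<forall>\<sigma>\<in>pchains B0 n. hd \<sigma> \<subseteq> A"
  using pchains_hd_mem by blast

lemma cells_subset: "\<forall>y\<in>cells A n. id y \<subseteq> A"
  by (auto simp: cells_def)

lemma kernel_op_in_S_car:
  assumes "sections_on t I c" "kernel_restricts k t I hd (pchains B0 n)"
  shows "kernel_op s res t I hd (pchains B0 n) k c \<in> S_car B0 F n"
  using sections_on_kernel_op[OF assms(1) hd_chains_subset assms(2)]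
  by (auto simp: S_car_def sections_on_def kernel_op_out)

lemma kernel_op_in_C_car:
  assumes "sections_on t I c" "kernel_restricts k t I id (cells A n)"
  shows "kernel_op s res t I id (cells A n) k c \<in> C_car A F n"
  using sections_on_kernel_op[OF assms(1) cells_subset assms(2)]
  by (auto simp: C_car_def sections_on_def kernel_op_out)

lemma S_d_summand:
  assumes \<sigma>: "\<sigma> \<in> pchains B0 n" and \<tau>: "\<tau> \<in> pchains B0 (n - 1)" and v: "v \<in> F (hd \<sigma>)"
  shows "(if face 0 \<sigma> = \<tau> then res (\<sigma> ! 0) (\<sigma> ! 1) v else 0)
      + (\<Sum>i\<in>{1..n}. if face i \<sigma> = \<tau> then alt i v else 0)
    = s (of_int (chain_inc \<sigma> \<tau>)) (res (hd \<sigma>) (hd \<tau>) v)"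
proof (cases n)
  case 0
  then obtain x where "\<sigma> = [x]"
    using \<sigma> by (auto simp: pchains_0)
  then show ?thesis
    using 0 pchains_not_Nil[OF \<tau>] by (simp add: chain_inc_singleton)
next
  case (Suc m)
  then obtain x0 x1 r where \<sigma>_eq: "\<sigma> = x0 # x1 # r"
    using pchains_length[OF \<sigma>] by (metis length_Suc_conv)
  have hdA: "hd \<sigma> \<subseteq> A"
    using pchains_hd_mem[OF \<sigma>] by simp
  have "{..<Suc n} = insert 0 {1..n}"
    by auto
  then have "chain_inc \<sigma> \<tau> = (if face 0 \<sigma> = \<tau> then 1 else 0) + (\<Sum>i\<in>{1..n}. if face i \<sigma> = \<tau> then (-1) ^ i else 0)"
    unfolding chain_inc_def pchains_length[OF \<sigma>] by simp
  moreover have "hd \<tau> = hd \<sigma>" if "face i \<sigma> = \<tau>" "i \<in> {1..n}" for i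
    using that hd_face[of i \<sigma>] \<sigma>_eq by auto
  ultimately show ?thesis
    using v hdA \<sigma>_eq hd_conv_nth[OF pchains_not_Nil[OF \<tau>]]
    by (simp add: scale_left_distrib scale_sum_left alt_eq_scale res_id if_distrib [of "\<lambda>k. s (of_int k) _"]
        cong: if_cong)
qed

lemma S_d_kernel_op:
  assumes c: "c \<in> S_car B0 F n"
  shows "S_d B0 res n c = kernel_op s res hd (pchains B0 n) hd (pchains B0 (n - 1)) chain_inc c"
proof
  fix \<tau>
  show "S_d B0 res n c \<tau> = kernel_op s res hd (pchains B0 n) hd (pchains B0 (n - 1)) chain_inc c \<tau>"
  proof (cases "\<tau> \<in> pchains B0 (n - 1)")
    case True
    have "S_d B0 res n c \<tau> = (\<Sum>\<sigma>\<in>pchains B0 n. (if face 0 \<sigma> = \<tau> then res (\<sigma> ! 0) (\<sigma> ! 1) (c \<sigma>) else 0)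
        + (\<Sum>i\<in>{1..n}. if face i \<sigma> = \<tau> then alt i (c \<sigma>) else 0))"
      using True by (simp add: S_d_def)
    also have "\<dots> = (\<Sum>\<sigma>\<in>pchains B0 n. s (of_int (chain_inc \<sigma> \<tau>)) (res (hd \<sigma>) (hd \<tau>) (c \<sigma>)))"
      using S_car_sections_on[OF c] True by (intro sum.cong refl S_d_summand) (auto simp: sections_on_def)
    finally show ?thesis
      using True by (simp add: kernel_op_in)
  qed (simp add: S_d_def kernel_op_out)
qed

lemma C_d_kernel_op:
  assumes e: "e \<in> C_car A F k"
  shows "C_d A res k e = kernel_op s res id (cells A k) id (cells A (k - 1)) cell_inc e"
proof
  fix w
  show "C_d A res k e w = kernel_op s res id (cells A k) id (cells A (k - 1)) cell_inc e w"
  proof (cases "w \<in> cells A (k - 1)")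
    case True
    have wA: "w \<subseteq> A"
      using True by (simp add: cells_def)
    let ?g = "\<lambda>y. s (of_int (cell_inc y w)) (res y w (e y))"
    have "kernel_op s res id (cells A k) id (cells A (k - 1)) cell_inc e w = (\<Sum>y\<in>cells A k. ?g y)"
      using True by (simp add: kernel_op_in)
    also have "\<dots> = (\<Sum>a\<in>A - w. ?g (insert a w))"
    proof (rule sum_insert_reindex[OF finite_A finite_cells])
      fix a assume a: "a \<in> A - w" "insert a w \<notin> cells A k"
      have "res (insert a w) w 0 = 0"
        using a wA by (intro res_zero) auto
      then show "?g (insert a w) = 0"
        using e a by (simp add: C_car_def)
    next
      fix y assume y: "y \<in> cells A k - (\<lambda>a. insert a w) ` (A - w)"
      have "cell_inc y w = 0"
      proof (rule ccontr)
        assume "cell_inc y w \<noteq> 0"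
        then obtain a where "a \<notin> w" "y = insert a w"
          by (rule cell_inc_nonzero)
        then show False
          using y by (auto simp: cells_def)
      qed
      then show "?g y = 0"
        by simp
    qed
    also have "\<dots> = C_d A res k e w"
      using True by (auto simp: C_d_def cell_inc_insert alt_eq_scale intro: sum.cong)
    finally show ?thesis ..
  qed (simp add: C_d_def kernel_op_out)
qed

lemma restricts_chain_inc: "kernel_restricts chain_inc hd (pchains B0 n) hd (pchains B0 (n - 1))"
  unfolding kernel_restricts_def
proof (intro ballI impI)
  fix \<sigma> \<tau> assume \<sigma>: "\<sigma> \<in> pchains B0 n" and \<tau>: "\<tau> \<in> pchains B0 (n - 1)" and nz: "chain_inc \<sigma> \<tau> \<noteq> 0"
  show "hd \<tau> \<subseteq> hd \<sigma>"
  proof (cases n)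
    case 0
    then obtain x where "\<sigma> = [x]"
      using \<sigma> by (auto simp: pchains_0)
    then show ?thesis
      using nz pchains_not_Nil[OF \<tau>] by (simp add: chain_inc_singleton)
  next
    case (Suc m)
    then show ?thesis
      using chain_inc_hd_subset[of \<sigma> B0 m \<tau>] \<sigma> nz by simp
  qed
qed

lemma restricts_cell_inc: "kernel_restricts cell_inc id (cells A k) id (cells A j)"
  unfolding kernel_restricts_def using cell_inc_subset by auto

lemma restricts_psi_coeff: "kernel_restricts psi_coeff hd (pchains B0 n) id (cells A n)"
  unfolding kernel_restricts_def using set_map_Min_subset_hd by (auto simp: psi_coeff_def split: if_splits)

lemma restricts_phi_coeff: "kernel_restricts (phi_coeff A n) id (cells A n) hd (pchains B0 n)"
  unfolding kernel_restricts_def using phi_coeff_support by fastforce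

lemma restricts_htpy_coeff: "kernel_restricts (htpy_coeff A n) hd (pchains B0 n) hd (pchains B0 (Suc n))"
  unfolding kernel_restricts_def using htpy_coeff_support by fastforce

abbreviation "psi_op n \<equiv> kernel_op s res hd (pchains B0 n) id (cells A n) psi_coeff"
abbreviation "phi_op n \<equiv> kernel_op s res id (cells A n) hd (pchains B0 n) (phi_coeff A n)"
abbreviation "htpy_op n \<equiv> kernel_op s res hd (pchains B0 n) hd (pchains B0 (Suc n)) (htpy_coeff A n)"

lemma psi_op_mem: "c \<in> S_car B0 F n \<Longrightarrow> psi_op n c \<in> C_car A F n"
  by (rule kernel_op_in_C_car[OF S_car_sections_on restricts_psi_coeff])

lemma phi_op_mem: "z \<in> C_car A F n \<Longrightarrow> phi_op n z \<in> S_car B0 F n"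
  by (rule kernel_op_in_S_car[OF C_car_sections_on restricts_phi_coeff])

lemma htpy_op_mem: "c \<in> S_car B0 F n \<Longrightarrow> htpy_op n c \<in> S_car B0 F (Suc n)"
  by (rule kernel_op_in_S_car[OF S_car_sections_on restricts_htpy_coeff])

lemma psi_op_chain:
  assumes c: "c \<in> S_car B0 F (Suc m)"
  shows "C_d A res (Suc m) (psi_op (Suc m) c) = psi_op m (S_d B0 res (Suc m) c)"
proof -
  have "C_d A res (Suc m) (psi_op (Suc m) c) = kernel_op s res id (cells A (Suc m)) id (cells A m) cell_inc (psi_op (Suc m) c)"
    using C_d_kernel_op[OF psi_op_mem[OF c]] by simp
  also have "\<dots> = kernel_op s res hd (pchains B0 (Suc m)) id (cells A m)
      (\<lambda>\<sigma> w. \<Sum>y\<in>cells A (Suc m). psi_coeff \<sigma> y * cell_inc y w) c"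
    by (rule kernel_op_comp[OF finite_cells S_car_sections_on[OF c] cells_subset restricts_psi_coeff restricts_cell_inc])
  also have "\<dots> = kernel_op s res hd (pchains B0 (Suc m)) id (cells A m)
      (\<lambda>\<sigma> w. \<Sum>\<tau>\<in>pchains B0 m. chain_inc \<sigma> \<tau> * psi_coeff \<tau> w) c"
    by (rule kernel_op_cong) (simp add: psi_coeff_chain)
  also have "\<dots> = psi_op m (kernel_op s res hd (pchains B0 (Suc m)) hd (pchains B0 m) chain_inc c)"
    using kernel_op_comp[OF finite_chains S_car_sections_on[OF c] hd_chains_subset
        restricts_chain_inc[of "Suc m"] restricts_psi_coeff] by simp
  finally show ?thesis
    using S_d_kernel_op[OF c] by simp
qed

lemma phi_op_chain:
  assumes z: "z \<in> C_car A F (Suc m)"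
  shows "S_d B0 res (Suc m) (phi_op (Suc m) z) = phi_op m (C_d A res (Suc m) z)"
proof -
  have "S_d B0 res (Suc m) (phi_op (Suc m) z) = kernel_op s res hd (pchains B0 (Suc m)) hd (pchains B0 m) chain_inc (phi_op (Suc m) z)"
    using S_d_kernel_op[OF phi_op_mem[OF z]] by simp
  also have "\<dots> = kernel_op s res id (cells A (Suc m)) hd (pchains B0 m)
      (\<lambda>y \<rho>. \<Sum>\<tau>\<in>pchains B0 (Suc m). phi_coeff A (Suc m) y \<tau> * chain_inc \<tau> \<rho>) z"
    using kernel_op_comp[OF finite_chains C_car_sections_on[OF z] hd_chains_subset
        restricts_phi_coeff restricts_chain_inc[of "Suc m"]] by simp
  also have "\<dots> = kernel_op s res id (cells A (Suc m)) hd (pchains B0 m)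
      (\<lambda>y \<rho>. \<Sum>w\<in>cells A m. cell_inc y w * phi_coeff A m w \<rho>) z"
    by (rule kernel_op_cong) (simp add: int_bd_phi_coeff [unfolded int_bd_def] del: phi_coeff.simps)
  also have "\<dots> = phi_op m (kernel_op s res id (cells A (Suc m)) id (cells A m) cell_inc z)"
    using kernel_op_comp[OF finite_cells C_car_sections_on[OF z] cells_subset restricts_cell_inc restricts_phi_coeff]
    by simp
  finally show ?thesis
    using C_d_kernel_op[OF z] by simp
qed

lemma psi_op_phi_op:
  assumes z: "z \<in> C_car A F m"
  shows "psi_op m (phi_op m z) = z"
proof -
  have "psi_op m (phi_op m z) = kernel_op s res id (cells A m) id (cells A m)
      (\<lambda>y y'. \<Sum>\<tau>\<in>pchains B0 m. phi_coeff A m y \<tau> * psi_coeff \<tau> y') z"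
    by (rule kernel_op_comp[OF finite_chains C_car_sections_on[OF z] hd_chains_subset restricts_phi_coeff restricts_psi_coeff])
  also have "\<dots> = kernel_op s res id (cells A m) id (cells A m) (\<lambda>y y'. if y = y' then 1 else 0) z"
    by (rule kernel_op_cong) (simp add: sum_phi_psi_coeff)
  also have "\<dots> = z"
    using z by (intro kernel_op_delta[OF finite_cells C_car_sections_on[OF z]]) (simp add: C_car_def)
  finally show ?thesis .
qed

lemma S_d_htpy_op:
  assumes c: "c \<in> S_car B0 F m"
  shows "S_d B0 res (Suc m) (htpy_op m c)
    = c - phi_op m (psi_op m c) - kernel_op s res hd (pchains B0 m) hd (pchains B0 m) (htpy_bd_coeff A m) c"
proof -
  let ?op = "kernel_op s res hd (pchains B0 m) hd (pchains B0 m)"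
  have "S_d B0 res (Suc m) (htpy_op m c) = kernel_op s res hd (pchains B0 (Suc m)) hd (pchains B0 m) chain_inc (htpy_op m c)"
    using S_d_kernel_op[OF htpy_op_mem[OF c]] by simp
  also have "\<dots> = ?op (\<lambda>\<sigma> \<rho>. \<Sum>\<tau>\<in>pchains B0 (Suc m). htpy_coeff A m \<sigma> \<tau> * chain_inc \<tau> \<rho>) c"
    using kernel_op_comp[OF finite_chains S_car_sections_on[OF c] hd_chains_subset
        restricts_htpy_coeff restricts_chain_inc[of "Suc m"]] by simp
  also have "\<dots> = ?op (\<lambda>\<sigma> \<rho>. ((if \<sigma> = \<rho> then 1 else 0) - phi_psi_coeff A m \<sigma> \<rho>) - htpy_bd_coeff A m \<sigma> \<rho>) c"
    by (rule kernel_op_cong) (simp add: int_bd_htpy_coeff [unfolded int_bd_def])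
  also have "\<dots> = ?op (\<lambda>\<sigma> \<rho>. if \<sigma> = \<rho> then 1 else 0) c - ?op (phi_psi_coeff A m) c - ?op (htpy_bd_coeff A m) c"
    by (simp only: kernel_op_diff_kernel)
  also have "?op (\<lambda>\<sigma> \<rho>. if \<sigma> = \<rho> then 1 else 0) c = c"
    using c by (intro kernel_op_delta[OF finite_chains S_car_sections_on[OF c]]) (simp add: S_car_def)
  also have "?op (phi_psi_coeff A m) c = phi_op m (psi_op m c)"
    using kernel_op_comp[OF finite_cells S_car_sections_on[OF c] cells_subset restricts_psi_coeff restricts_phi_coeff]
    by (simp add: phi_psi_coeff_def [abs_def])
  finally show ?thesis .
qed

lemma htpy_bd_op_cycle:
  assumes c: "c \<in> cycles (S_car B0 F) (S_d B0 res) m"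
  shows "kernel_op s res hd (pchains B0 m) hd (pchains B0 m) (htpy_bd_coeff A m) c = 0"
proof (cases m)
  case 0
  then show ?thesis
    by (simp add: htpy_bd_coeff_def kernel_op_def fun_eq_iff)
next
  case (Suc j)
  have cS: "c \<in> S_car B0 F (Suc j)" and d: "kernel_op s res hd (pchains B0 (Suc j)) hd (pchains B0 j) chain_inc c = 0"
    using c S_d_kernel_op[of c "Suc j"] Suc by (auto simp: cycles_def zero_fun_def)
  have "kernel_op s res hd (pchains B0 m) hd (pchains B0 m) (htpy_bd_coeff A m) c
      = htpy_op j (kernel_op s res hd (pchains B0 (Suc j)) hd (pchains B0 j) chain_inc c)"
    using kernel_op_comp[OF finite_chains S_car_sections_on[OF cS] hd_chains_subset
        restricts_chain_inc[of "Suc j"] restricts_htpy_coeff] Suc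
    by (simp add: htpy_bd_coeff_def [abs_def])
  then show ?thesis
    using d kernel_op_zero[OF hd_chains_subset restricts_htpy_coeff] by simp
qed

lemma S_car_add: "c \<in> S_car B0 F n \<Longrightarrow> c' \<in> S_car B0 F n \<Longrightarrow> c + c' \<in> S_car B0 F n"
  unfolding S_car_def using add_mem_F hd_chains_subset by auto

lemma S_d_add:
  assumes "c \<in> S_car B0 F n" "c' \<in> S_car B0 F n"
  shows "S_d B0 res n (c + c') = S_d B0 res n c + S_d B0 res n c'"
  using S_d_kernel_op[OF S_car_add[OF assms]] S_d_kernel_op[OF assms(1)] S_d_kernel_op[OF assms(2)]
    kernel_op_add[OF S_car_sections_on[OF assms(1)] S_car_sections_on[OF assms(2)] restricts_chain_inc]
  by simp

lemma zero_in_C_car: "0 \<in> C_car A F n"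
  unfolding C_car_def using zero_mem_F by (auto simp: cells_def)

lemma C_d_zero: "C_d A res n 0 = 0"
  using C_d_kernel_op[OF zero_in_C_car] kernel_op_zero[OF cells_subset restricts_cell_inc] by simp

lemma psi_op_lin: "lin_on (fscale s) (fscale s) (S_car B0 F n) (psi_op n)"
  unfolding lin_on_def
  using kernel_op_add[OF S_car_sections_on S_car_sections_on restricts_psi_coeff]
    kernel_op_scale[OF S_car_sections_on restricts_psi_coeff]
  by blast

lemma homology_iso_sheaf_cellular: "homology_iso s (S_car B0 F) (S_d B0 res) (C_car A F) (C_d A res) n"
proof (rule homology_iso_if_deformation_retract[where psi = psi_op and phi = phi_op and htpy = "htpy_op n"])
  fix c assume "c \<in> cycles (S_car B0 F) (S_d B0 res) n"
  then show "S_d B0 res (Suc n) (htpy_op n c) = c - phi_op n (psi_op n c)"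
    using S_d_htpy_op[of c n] htpy_bd_op_cycle by (simp add: cycles_def)
qed (simp_all add: psi_op_lin psi_op_mem phi_op_mem htpy_op_mem S_car_add S_d_add zero_in_C_car C_d_zero
    kernel_op_zero[OF hd_chains_subset restricts_psi_coeff] kernel_op_zero[OF cells_subset restricts_phi_coeff]
    psi_op_chain phi_op_chain psi_op_phi_op)

end

theorem theorem4:
  fixes A :: "'a::linorder set"
    and s :: "'r::comm_ring_1 \<Rightarrow> 'm::ab_group_add \<Rightarrow> 'm"
    and F :: "'a set \<Rightarrow> 'm set"
    and res :: "'a set \<Rightarrow> 'a set \<Rightarrow> 'm \<Rightarrow> 'm"
  assumes "finite A"
    and "module s"
    and "is_sheaf s (Pow A) F res"
  shows "\<forall>n. homology_iso s
           (S_car (Pow A - {{}}) F) (S_d (Pow A - {{}}) res)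
           (C_car A F) (C_d A res) n"
proof -
  interpret boolean_sheaf A s F res
    using assms by (simp add: boolean_sheaf_def boolean_sheaf_axioms_def finite_boolean_def)
  show ?thesis
    using homology_iso_sheaf_cellular by blast
qed

end
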